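(* Under any stationary policy $v$, the Markov chain $\{X_t\}$ has a single aperiodic communicating class $\widetilde S$ containing $\theta=[0,\dots,0]$ (possibly together with some transient states), and restricted to $\widetilde S$ the chain is geometrically ergodic. Moreover, letting $\pi$ denote its unique stationary distribution and $\tau_\theta := \min\{t\ge 0: X_t=\theta\}$: (1) there exists $a>0$ such that for every $x\ne\theta$, $\mathbb{E}[e^{a\tau_\theta}\mid X_0=x]\le K_x<\infty$ for some constant $K_x$, uniformly in $v$; (2) for every $f$ with $f = O(\Phi)$, $\mathbb{E}[f(X_t)]\to \sum_y \pi(y) f(y)$ exponentially fast, uniformly in $v$; in fact there are $K>0$ and $0<\eta<1$ with $\left|\mathbb{E}[f(X_t)\mid X_0=x] - \sum_y \pi(y)f(y)\right| \le K\left(1+\sum_i e^{a x_i}\right)\eta^t$ for $x=[x_1,\dots,x_I]$; (3) $\sup \mathbb{E}\left[\sum_i X^i_t\right]<\infty$, where the supremum is over all stationary policies and the expectation is with respect to the corresponding stationary distributions; in particular these stationary distributions form a compact (tight) set of probability measures; (4) $\sup \mathbb{E}\left[\sum_{t=0}^{\tau_\theta} \sum_i X^i_t\right] < \infty$, with the supremum as in (3).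
   Context: Processor sharing model: a single Bernoulli arrival process $\{\xi_t\}$ ($\xi_t\in\{0,1\}$ i.i.d., $P(\xi_t=1)=p\in(0,1)$). There are $I$ queues with lengths $X^i_t\in\mathcal N:=\{0,1,2,\dots\}$ evolving as $X^i_{t+1} = X^i_t - D^i_{t+1} + \nu^i_t \xi_{t+1}$, where $\nu^i_t\in\{0,1\}$, $\sum_i\nu^i_t=1$. Given $X^i_t = x\ge 1$, $D^i_{t+1}\sim \mathrm{Binomial}(x, q_i/x)$; if $x=0$ there are no departures. Standing assumption: $1>q_1>\dots>q_I>2p>0$. A stationary policy is a map $v:\mathcal N^I\to\{e_1,\dots,e_I\}$ (unit coordinate vectors) with $\nu_t = v(X_t)$; under it $\{X_t\}$ is a time-homogeneous Markov chain. $\Phi([x_1,\dots,x_I])=\sum_i e^{a x_i}$ where $a>0$ satisfies $p(e^a-1)<\frac{q_I}{2}(1-e^{-a})$. *)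

theory Defs
  imports "HOL-Probability.Probability"
begin

type_synonym 'i qstate = "'i \<Rightarrow> nat"

text \<open>One-step transition kernel of the processor sharing chain under stationary policy v
  (v x is the queue receiving a possible arrival; i.e. nu_t = e_(v X_t)).\<close>
definition queue_kernel ::
  "real \<Rightarrow> ('i::finite \<Rightarrow> real) \<Rightarrow> ('i qstate \<Rightarrow> 'i) \<Rightarrow> 'i qstate \<Rightarrow> 'i qstate pmf" where
  "queue_kernel p q v x =
     bind_pmf (bernoulli_pmf p) (\<lambda>\<xi>.
     bind_pmf (Pi_pmf UNIV 0 (\<lambda>i. if x i = 0 then return_pmf 0
                                   else binomial_pmf (x i) (q i / real (x i)))) (\<lambda>D.
     return_pmf (\<lambda>i. x i - D i + (if v x = i \<and> \<xi> then 1 else 0))))"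

primrec kstep :: "('s \<Rightarrow> 's pmf) \<Rightarrow> 's \<Rightarrow> nat \<Rightarrow> 's pmf" where
  "kstep K x 0 = return_pmf x"
| "kstep K x (Suc n) = bind_pmf (kstep K x n) K"

primrec path_pmf :: "('s \<Rightarrow> 's pmf) \<Rightarrow> 's \<Rightarrow> nat \<Rightarrow> 's list pmf" where
  "path_pmf K x 0 = return_pmf [x]"
| "path_pmf K x (Suc n) = bind_pmf (path_pmf K x n) (\<lambda>xs. map_pmf (\<lambda>y. xs @ [y]) (K (last xs)))"

definition path_from :: "('s \<Rightarrow> 's pmf) \<Rightarrow> 's pmf \<Rightarrow> nat \<Rightarrow> 's list pmf" where
  "path_from K mu n = bind_pmf mu (\<lambda>x. path_pmf K x n)"

definition stationary :: "('s \<Rightarrow> 's pmf) \<Rightarrow> 's pmf \<Rightarrow> bool" where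
  "stationary K \<pi> \<longleftrightarrow> bind_pmf \<pi> K = \<pi>"

definition accessible :: "('s \<Rightarrow> 's pmf) \<Rightarrow> 's \<Rightarrow> 's \<Rightarrow> bool" where
  "accessible K x y \<longleftrightarrow> (\<exists>n. pmf (kstep K x n) y > 0)"

definition communicating_class :: "('s \<Rightarrow> 's pmf) \<Rightarrow> 's \<Rightarrow> 's set" where
  "communicating_class K x = {y. accessible K x y \<and> accessible K y x}"

definition closed_set :: "('s \<Rightarrow> 's pmf) \<Rightarrow> 's set \<Rightarrow> bool" where
  "closed_set K S \<longleftrightarrow> (\<forall>x\<in>S. \<forall>y. accessible K x y \<longrightarrow> y \<in> S)"

definition period :: "('s \<Rightarrow> 's pmf) \<Rightarrow> 's \<Rightarrow> nat" where
  "period K x = Gcd {n. n > 0 \<and> pmf (kstep K x n) x > 0}"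

definition return_prob :: "('s \<Rightarrow> 's pmf) \<Rightarrow> 's \<Rightarrow> real" where
  "return_prob K x = (SUP n. measure_pmf.prob (path_pmf K x n) {xs. \<exists>t\<in>{1..n}. xs ! t = x})"

definition transient :: "('s \<Rightarrow> 's pmf) \<Rightarrow> 's \<Rightarrow> bool" where
  "transient K x \<longleftrightarrow> return_prob K x < 1"

text \<open>Total variation distance (as l1 distance) between two distributions.\<close>
definition tv_dist :: "'s pmf \<Rightarrow> 's pmf \<Rightarrow> real" where
  "tv_dist P Q = (\<Sum>\<^sub>\<infinity>y. \<bar>pmf P y - pmf Q y\<bar>)"

definition geom_ergodic_on :: "('s \<Rightarrow> 's pmf) \<Rightarrow> 's set \<Rightarrow> 's pmf \<Rightarrow> bool" where
  "geom_ergodic_on K S \<pi> \<longleftrightarrow>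
     (\<exists>\<rho> M. 0 \<le> \<rho> \<and> \<rho> < 1 \<and> (\<forall>x\<in>S. \<forall>n. tv_dist (kstep K x n) \<pi> \<le> M x * \<rho> ^ n))"

text \<open>Hitting time of theta, truncated at n, for a path prefix [X_0,...,X_n]:
  min(tau_theta, n) with tau_theta = min{t >= 0. X_t = theta}.\<close>
definition hit_trunc :: "'s \<Rightarrow> nat \<Rightarrow> 's list \<Rightarrow> nat" where
  "hit_trunc \<theta> n xs = (if \<exists>t\<le>n. xs ! t = \<theta> then (LEAST t. xs ! t = \<theta>) else n)"

text \<open>E[F(tau_theta, X_0..X_tau)] for functionals monotone in the truncation, computed
  by monotone convergence as the supremum over n of E[F(min(tau,n), path)]; this value
  is infinite whenever tau = infinity with positive probability and F grows to infinity.\<close>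
definition hit_expect ::
  "('s \<Rightarrow> 's pmf) \<Rightarrow> 's \<Rightarrow> 's pmf \<Rightarrow> (nat \<Rightarrow> 's list \<Rightarrow> ennreal) \<Rightarrow> ennreal" where
  "hit_expect K \<theta> mu F = (SUP n. \<integral>\<^sup>+ xs. F (hit_trunc \<theta> n xs) xs \<partial>measure_pmf (path_from K mu n))"

definition Phi :: "real \<Rightarrow> ('i::finite) qstate \<Rightarrow> real" where
  "Phi a x = (\<Sum>i\<in>UNIV. exp (a * real (x i)))"

end

theory Submission
  imports Defs
begin

text \<open>
  Two Lyapunov functions drive the proof. The function \<open>\<Phi>(x) = \<Sum>\<^sub>i exp (a x\<^sub>i)\<close> has the
  geometric drift \<open>P\<Phi> \<le> \<lambda>\<Phi> + K\<close> with \<open>\<lambda> < 1\<close>: a nonempty queue loses on average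
  \<open>q\<^sub>i \<ge> q\<^sub>I\<close> customers while at most one customer arrives, and the hypothesis on \<open>a\<close> makes the
  net exponential effect contracting. From every sublevel set of \<open>\<Phi>\<close> the chain jumps to the empty
  state \<open>\<theta>\<close> with probability bounded below (no arrival, every queue served completely). Harris'
  theorem, in the form of Hairer and Mattingly, turns drift and this minorization into a contraction
  of \<open>P\<close> for the weighted Lipschitz seminorm with weight \<open>1 + \<beta>\<Phi>\<close>; the unique stationary law
  and the geometric convergence follow. The second function \<open>U(x) = exp (a \<Sum>\<^sub>i x\<^sub>i)\<close> satisfies
  \<open>PU \<le> \<lambda>U\<close> away from \<open>\<theta>\<close>, which bounds the exponential moments of the hitting time of \<open>\<theta>\<close>
  and, through the Poisson inequality for \<open>U / (a (1 - \<lambda>))\<close>, the cost accumulated before it.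
  None of the constants depends on the policy.
\<close>

no_notation Infinite_Sum.abs_summable_on (infixr \<open>abs'_summable'_on\<close> 46)

section \<open>Finitely supported kernels\<close>

lemma kstep_add: "kstep K x (m + n) = bind_pmf (kstep K x m) (\<lambda>z. kstep K z n)"
  by (induction n) (simp_all add: bind_return_pmf' bind_assoc_pmf)

lemma finite_set_pmf_kstep: "(\<And>x. finite (set_pmf (K x))) \<Longrightarrow> finite (set_pmf (kstep K x n))"
  by (induction n) auto

lemma stationary_bind_kstep: "stationary K \<pi> \<Longrightarrow> bind_pmf \<pi> (\<lambda>z. kstep K z n) = \<pi>"
proof (induction n)
  case 0 then show ?case by (simp add: bind_return_pmf')
next
  case (Suc n)
  have "bind_pmf \<pi> (\<lambda>z. kstep K z (Suc n)) = bind_pmf (bind_pmf \<pi> (\<lambda>z. kstep K z n)) K"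
    by (simp add: bind_assoc_pmf)
  also have "\<dots> = \<pi>" using Suc by (simp add: stationary_def)
  finally show ?case .
qed

lemma pmf_bind_ge:
  assumes "finite (set_pmf M)"
  shows "pmf (bind_pmf M N) y \<ge> pmf M m * pmf (N m) y"
proof -
  have "pmf (bind_pmf M N) y = (\<Sum>x\<in>insert m (set_pmf M). pmf (N x) y * pmf M x)"
    unfolding pmf_bind by (rule integral_measure_pmf_real) (use assms in auto)
  also have "\<dots> \<ge> pmf (N m) y * pmf M m"
    by (rule member_le_sum) (use assms in auto)
  finally show ?thesis by (simp add: mult.commute)
qed

lemma expectation_bind_pmf_finite:
  fixes f :: "'b \<Rightarrow> real"
  assumes fM: "finite (set_pmf M)" and fN: "\<And>x. x \<in> set_pmf M \<Longrightarrow> finite (set_pmf (N x))"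
  shows "measure_pmf.expectation (bind_pmf M N) f
           = measure_pmf.expectation M (\<lambda>x. measure_pmf.expectation (N x) f)"
proof -
  define S where "S = set_pmf (bind_pmf M N)"
  have fS: "finite S" using fM fN by (auto simp: S_def)
  have expect_N: "measure_pmf.expectation (N x) f = (\<Sum>z\<in>S. f z * pmf (N x) z)"
    if "x \<in> set_pmf M" for x
    by (rule integral_measure_pmf_real[OF fS]) (use that in \<open>auto simp: S_def\<close>)
  have "measure_pmf.expectation (bind_pmf M N) f = (\<Sum>z\<in>S. f z * pmf (bind_pmf M N) z)"
    by (rule integral_measure_pmf_real[OF fS]) (auto simp: S_def)
  also have "\<dots> = (\<Sum>z\<in>S. \<Sum>x\<in>set_pmf M. f z * pmf (N x) z * pmf M x)"
    unfolding pmf_bind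
    by (subst integral_measure_pmf_real[OF fM]) (auto simp: sum_distrib_left mult.assoc)
  also have "\<dots> = (\<Sum>x\<in>set_pmf M. measure_pmf.expectation (N x) f * pmf M x)"
    by (subst sum.swap) (simp add: expect_N sum_distrib_right)
  also have "\<dots> = measure_pmf.expectation M (\<lambda>x. measure_pmf.expectation (N x) f)"
    by (rule integral_measure_pmf_real[OF fM, symmetric]) auto
  finally show ?thesis .
qed

lemma expectation_kstep_Suc:
  fixes f :: "'s \<Rightarrow> real"
  assumes "\<And>x. finite (set_pmf (K x))"
  shows "measure_pmf.expectation (kstep K x (Suc n)) f
           = measure_pmf.expectation (kstep K x n) (\<lambda>z. measure_pmf.expectation (K z) f)"
  unfolding kstep.simps by (rule expectation_bind_pmf_finite[OF finite_set_pmf_kstep]) (use assms in auto)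

lemma expectation_kstep_drift_le:
  fixes V :: "'s \<Rightarrow> real"
  assumes fin: "\<And>x. finite (set_pmf (K x))" and V_nonneg: "\<And>x. V x \<ge> 0"
    and drift: "\<And>x. measure_pmf.expectation (K x) V \<le> l * V x + k"
    and l: "0 \<le> l" "l < 1" and k: "k \<ge> 0"
  shows "measure_pmf.expectation (kstep K x n) V \<le> V x + k / (1 - l)"
proof (induction n arbitrary: x)
  case 0 then show ?case using k l by simp
next
  case (Suc n)
  have int: "integrable (measure_pmf (kstep K x n)) g" for g :: "'s \<Rightarrow> real"
    by (rule integrable_measure_pmf_finite[OF finite_set_pmf_kstep[OF fin]])
  have "measure_pmf.expectation (kstep K x (Suc n)) V
          \<le> measure_pmf.expectation (kstep K x n) (\<lambda>z. l * V z + k)"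
    unfolding expectation_kstep_Suc[OF fin] by (rule integral_mono) (use int drift in auto)
  also have "\<dots> = l * measure_pmf.expectation (kstep K x n) V + k"
    by (simp add: int)
  also have "\<dots> \<le> l * (V x + k / (1 - l)) + k"
    using Suc.IH[of x] l by (simp add: mult_left_mono)
  also have "\<dots> \<le> V x + k / (1 - l)"
  proof -
    have "l * V x \<le> V x" using l V_nonneg[of x] by (simp add: mult_left_le_one_le)
    moreover have "l * (k / (1 - l)) + k = k / (1 - l)" using l by (simp add: field_simps)
    ultimately show ?thesis by (simp add: algebra_simps)
  qed
  finally show ?case .
qed

lemma expectation_minus_point_mass_le:
  fixes g h :: "'a \<Rightarrow> real"
  assumes M: "pmf M t \<ge> a" "finite (set_pmf M)" and gh: "\<And>z. \<bar>g z\<bar> \<le> h z"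
  shows "\<bar>measure_pmf.expectation M g - a * g t\<bar> \<le> measure_pmf.expectation M h - a * h t"
proof -
  define A where "A = insert t (set_pmf M)"
  define m where "m z = pmf M z - (if z = t then a else 0)" for z
  have fA: "finite A" using M by (simp add: A_def)
  have m_nonneg: "0 \<le> m z" for z using M by (auto simp: m_def)
  have as_sum: "measure_pmf.expectation M f - a * f t = (\<Sum>z\<in>A. f z * m z)" for f :: "'a \<Rightarrow> real"
  proof -
    have "(\<Sum>z\<in>A. f z * m z) = (\<Sum>z\<in>A. f z * pmf M z) - (\<Sum>z\<in>A. if z = t then f t * a else 0)"
      by (subst sum_subtractf[symmetric]) (rule sum.cong, auto simp: m_def right_diff_distrib)
    also have "(\<Sum>z\<in>A. if z = t then f t * a else 0) = f t * a"
      using fA by (simp add: A_def)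
    also have "(\<Sum>z\<in>A. f z * pmf M z) = measure_pmf.expectation M f"
      by (rule integral_measure_pmf_real[symmetric, OF fA]) (auto simp: A_def)
    finally show ?thesis by simp
  qed
  have "\<bar>\<Sum>z\<in>A. g z * m z\<bar> \<le> (\<Sum>z\<in>A. \<bar>g z\<bar> * m z)"
    using sum_abs[of "\<lambda>z. g z * m z" A] m_nonneg by (simp add: abs_mult)
  also have "\<dots> \<le> (\<Sum>z\<in>A. h z * m z)"
    by (rule sum_mono) (use gh m_nonneg in \<open>auto intro: mult_right_mono\<close>)
  finally show ?thesis using as_sum[of g] as_sum[of h] by simp
qed

lemma sum_sgn_diff_mult:
  fixes u v c :: "'a \<Rightarrow> real"
  shows "(\<Sum>y\<in>F. sgn (u y - v y) * c y * u y) - (\<Sum>y\<in>F. sgn (u y - v y) * c y * v y)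
           = (\<Sum>y\<in>F. \<bar>u y - v y\<bar> * c y)"
  unfolding sum_subtractf[symmetric]
  by (rule sum.cong) (auto simp: sgn_if algebra_simps)

lemma abs_summable_if_finite_sums_bounded:
  fixes f :: "'a \<Rightarrow> real"
  assumes "\<And>F. finite F \<Longrightarrow> (\<Sum>x\<in>F. \<bar>f x\<bar>) \<le> B"
  shows "f abs_summable_on UNIV" "infsetsum (\<lambda>x. \<bar>f x\<bar>) UNIV \<le> B"
proof -
  show s: "f abs_summable_on UNIV"
    by (rule abs_summable_finite_sumsI) (use assms in auto)
  have B0: "B \<ge> 0" using assms[of "{}"] by simp
  have "ennreal (infsetsum (\<lambda>x. \<bar>f x\<bar>) UNIV)
          = (SUP F\<in>{F. finite F \<and> F \<subseteq> UNIV}. ennreal (sum (\<lambda>x. \<bar>f x\<bar>) F))"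
    by (rule infsetsum_nonneg_is_SUPREMUM_ennreal) (use s in \<open>auto simp: abs_summable_on_def\<close>)
  also have "\<dots> \<le> ennreal B"
    by (rule SUP_least) (use assms in \<open>auto intro: ennreal_leI\<close>)
  finally show "infsetsum (\<lambda>x. \<bar>f x\<bar>) UNIV \<le> B"
    using B0 by (auto simp: ennreal_le_iff2 infsetsum_nonneg)
qed

lemma integrable_measure_pmf_iff_abs_summable:
  fixes g :: "'a \<Rightarrow> real"
  shows "integrable (measure_pmf p) g \<longleftrightarrow> (\<lambda>x. pmf p x * g x) abs_summable_on UNIV"
  unfolding measure_pmf_eq_density abs_summable_on_def by (subst integrable_density) auto

lemma eq_0_if_abs_le_geometric:
  fixes c C r :: real
  assumes "\<And>n. \<bar>c\<bar> \<le> C * r ^ n" "0 \<le> r" "r < 1"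
  shows "c = 0"
proof -
  have "(\<lambda>n. C * r ^ n) \<longlonglongrightarrow> C * 0"
    by (intro tendsto_intros LIMSEQ_power_zero) (use assms in auto)
  then have "\<bar>c\<bar> \<le> 0" by (intro LIMSEQ_le_const[of "\<lambda>n. C * r ^ n"]) (use assms in auto)
  then show ?thesis by simp
qed

section \<open>Harris' theorem for a kernel with an atom\<close>

locale harris =
  fixes K :: "'s \<Rightarrow> 's pmf" and V :: "'s \<Rightarrow> real" and \<theta> :: 's and lam Kc \<alpha> :: real
  assumes finite_support: "\<And>x. finite (set_pmf (K x))"
    and V_ge_1: "\<And>x. V x \<ge> 1"
    and drift: "\<And>x. measure_pmf.expectation (K x) V \<le> lam * V x + Kc"
    and lam_nonneg: "0 \<le> lam" and lam_less_1: "lam < 1" and Kc_pos: "Kc > 0"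
    and \<alpha>_pos: "0 < \<alpha>"
    and minorization: "\<And>x. V x \<le> 8 * Kc / (1 - lam) \<Longrightarrow> pmf (K x) \<theta> \<ge> \<alpha>"
begin

definition "\<beta> = \<alpha> / (2 * Kc)"
definition "\<rho> = max ((1 + lam) / 2) (1 - \<alpha> / 2)"
definition "w x = 1 + \<beta> * V x"

text \<open>Lipschitz continuity for the metric \<open>d(x, y) = w x + w y\<close> (\<open>x \<noteq> y\<close>) of Hairer and Mattingly.\<close>
definition "w_lipschitz L f \<longleftrightarrow> (\<forall>x y. x \<noteq> y \<longrightarrow> \<bar>f x - f y\<bar> \<le> L * (w x + w y))"

definition P :: "('s \<Rightarrow> real) \<Rightarrow> 's \<Rightarrow> real" where
  "P f x = measure_pmf.expectation (K x) f"
definition Pn :: "nat \<Rightarrow> ('s \<Rightarrow> real) \<Rightarrow> 's \<Rightarrow> real" where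
  "Pn n f x = measure_pmf.expectation (kstep K x n) f"

lemma \<beta>_pos: "\<beta> > 0" using \<alpha>_pos Kc_pos by (simp add: \<beta>_def)
lemma \<rho>_less_1: "\<rho> < 1" using \<alpha>_pos lam_less_1 by (simp add: \<rho>_def)
lemma \<rho>_pos: "\<rho> > 0" using lam_nonneg by (simp add: \<rho>_def max_def)
lemma lam_le_\<rho>: "lam \<le> \<rho>" using lam_less_1 by (simp add: \<rho>_def max_def)
lemma \<rho>_ge: "1 - \<alpha> / 2 \<le> \<rho>" "(1 + lam) / 2 \<le> \<rho>" by (simp_all add: \<rho>_def)
lemma w_ge_1: "w x \<ge> 1" using \<beta>_pos V_ge_1[of x] by (simp add: w_def)
lemma w_nonneg: "w x \<ge> 0" using w_ge_1[of x] by simp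

lemma finite_set_pmf_kstep': "finite (set_pmf (kstep K x n))"
  by (rule finite_set_pmf_kstep[OF finite_support])

lemma integrable_K [simp]: "integrable (measure_pmf (K x)) (f :: 's \<Rightarrow> real)"
  by (rule integrable_measure_pmf_finite[OF finite_support])

lemma integrable_kstep [simp]: "integrable (measure_pmf (kstep K x n)) (f :: 's \<Rightarrow> real)"
  by (rule integrable_measure_pmf_finite[OF finite_set_pmf_kstep'])

lemma P_mono: "(\<And>z. f z \<le> g z) \<Longrightarrow> P f x \<le> P g x"
  unfolding P_def by (rule integral_mono) auto

lemma P_w_le: "P w x \<le> 1 + \<beta> * (lam * V x + Kc)"
  using drift[of x] \<beta>_pos by (simp add: P_def w_def[abs_def] mult_left_mono)

lemma w_lipschitz_if_bounded:
  assumes "\<And>z. \<bar>g z\<bar> \<le> L * w z" shows "w_lipschitz L g"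
  unfolding w_lipschitz_def using assms by (smt (verit) distrib_left)

lemma w_lipschitz_recentre:
  assumes L: "L \<ge> 0" and f: "w_lipschitz L f"
  obtains c where "\<And>z. \<bar>f z - c\<bar> \<le> L * w z"
proof -
  define c where "c = (INF u. f u + L * w u)"
  have lo: "f z - L * w z \<le> f u + L * w u" for u z
  proof (cases "u = z")
    case True then show ?thesis using L w_ge_1[of z] by simp
  next
    case False
    then have "\<bar>f z - f u\<bar> \<le> L * (w z + w u)" using f unfolding w_lipschitz_def by metis
    then show ?thesis by (simp add: algebra_simps abs_le_iff)
  qed
  have bdd: "bdd_below (range (\<lambda>u. f u + L * w u))"
    by (rule bdd_belowI[of _ "f \<theta> - L * w \<theta>"]) (use lo in auto)
  have "\<bar>f z - c\<bar> \<le> L * w z" for z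
  proof -
    have "c \<le> f z + L * w z" unfolding c_def by (rule cINF_lower[OF bdd]) simp
    moreover have "f z - L * w z \<le> c" unfolding c_def by (rule cINF_greatest) (use lo in auto)
    ultimately show ?thesis by (simp add: abs_le_iff)
  qed
  then show ?thesis by (rule that)
qed

lemma w_add_w: "w x + w y = 2 + \<beta> * (V x + V y)"
  by (simp add: w_def algebra_simps)

text \<open>With \<open>\<beta> = \<alpha> / (2 Kc)\<close> the drift constant \<open>Kc\<close> is absorbed by \<open>\<alpha>\<close> in both cases below.\<close>
lemma two_\<beta>_Kc: "2 * \<beta> * Kc = \<alpha>"
  using Kc_pos by (simp add: \<beta>_def)

text \<open>Near the atom the laws \<open>K x\<close> and \<open>K y\<close> share the mass \<open>\<alpha>\<close> at \<open>\<theta>\<close>.\<close>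
lemma P_diff_near_atom:
  assumes L: "L \<ge> 0" and g: "\<And>z. \<bar>g z\<bar> \<le> L * w z"
    and x: "V x \<le> 8 * Kc / (1 - lam)" and y: "V y \<le> 8 * Kc / (1 - lam)"
  shows "\<bar>P g x - P g y\<bar> \<le> L * (\<rho> * (w x + w y))"
proof -
  have near: "\<bar>P g z - \<alpha> * g \<theta>\<bar> \<le> L * (1 - \<alpha> + \<beta> * (lam * V z + Kc))"
    if "V z \<le> 8 * Kc / (1 - lam)" for z
  proof -
    have "\<bar>P g z - \<alpha> * g \<theta>\<bar> \<le> L * P w z - \<alpha> * (L * w \<theta>)"
      using expectation_minus_point_mass_le[OF minorization[OF that] finite_support g]
      by (simp add: P_def)
    also have "\<dots> \<le> L * (P w z - \<alpha>)"
      using w_ge_1[of \<theta>] L \<alpha>_pos by (simp add: algebra_simps mult_left_mono)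
    also have "\<dots> \<le> L * (1 - \<alpha> + \<beta> * (lam * V z + Kc))"
      using P_w_le[of z] L by (intro mult_left_mono) auto
    finally show ?thesis .
  qed
  have "\<bar>P g x - P g y\<bar> \<le> \<bar>P g x - \<alpha> * g \<theta>\<bar> + \<bar>P g y - \<alpha> * g \<theta>\<bar>" by simp
  also have "\<dots> \<le> L * (1 - \<alpha> + \<beta> * (lam * V x + Kc)) + L * (1 - \<alpha> + \<beta> * (lam * V y + Kc))"
    using near x y by (intro add_mono)
  also have "\<dots> = L * (2 - \<alpha> + \<beta> * lam * (V x + V y))"
    using two_\<beta>_Kc by (simp add: algebra_simps)
  also have "\<dots> \<le> L * (\<rho> * (w x + w y))"
  proof (intro mult_left_mono L)
    have "\<beta> * lam * (V x + V y) \<le> \<rho> * (\<beta> * (V x + V y))"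
      using lam_le_\<rho> \<beta>_pos V_ge_1[of x] V_ge_1[of y]
      by (simp add: mult.commute mult.left_commute mult_left_mono)
    then show "2 - \<alpha> + \<beta> * lam * (V x + V y) \<le> \<rho> * (w x + w y)"
      using \<rho>_ge(1) by (simp add: w_add_w algebra_simps)
  qed
  finally show ?thesis .
qed

text \<open>Far from the atom the drift alone shrinks \<open>w x + w y\<close>; the level \<open>8 Kc / (1 - lam)\<close>
  of the minorization is chosen for this case.\<close>
lemma P_diff_far:
  assumes L: "L \<ge> 0" and g: "\<And>z. \<bar>g z\<bar> \<le> L * w z"
    and far: "V x + V y \<ge> 8 * Kc / (1 - lam)"
  shows "\<bar>P g x - P g y\<bar> \<le> L * (\<rho> * (w x + w y))"
proof -
  have bound: "\<bar>P g z\<bar> \<le> L * (1 + \<beta> * (lam * V z + Kc))" for z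
  proof -
    have "\<bar>P g z\<bar> \<le> P (\<lambda>u. \<bar>g u\<bar>) z"
      unfolding P_def by (rule integral_abs_bound[THEN order_trans]) simp
    also have "\<dots> \<le> P (\<lambda>u. L * w u) z" by (rule P_mono) (rule g)
    also have "\<dots> \<le> L * (1 + \<beta> * (lam * V z + Kc))"
      using P_w_le[of z] L by (simp add: P_def mult_left_mono)
    finally show ?thesis .
  qed
  define S where "S = V x + V y"
  have "\<bar>P g x - P g y\<bar> \<le> \<bar>P g x\<bar> + \<bar>P g y\<bar>" by simp
  also have "\<dots> \<le> L * (1 + \<beta> * (lam * V x + Kc)) + L * (1 + \<beta> * (lam * V y + Kc))"
    using bound by (intro add_mono)
  also have "\<dots> = L * (2 + \<alpha> + \<beta> * lam * S)"
    using two_\<beta>_Kc by (simp add: S_def algebra_simps)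
  also have "\<dots> \<le> L * (\<rho> * (2 + \<beta> * S))"
  proof (intro mult_left_mono L)
    have "(\<rho> - lam) * (\<beta> * S) \<ge> ((1 - lam) / 2) * (\<beta> * (8 * Kc / (1 - lam)))"
      using \<rho>_ge lam_less_1 \<beta>_pos far Kc_pos by (intro mult_mono) (auto simp: S_def field_simps)
    also have "((1 - lam) / 2) * (\<beta> * (8 * Kc / (1 - lam))) = 2 * (2 * \<beta> * Kc)"
      using lam_less_1 by (simp add: field_simps)
    also have "\<dots> = 2 * \<alpha>" using two_\<beta>_Kc by simp
    finally show "2 + \<alpha> + \<beta> * lam * S \<le> \<rho> * (2 + \<beta> * S)"
      using \<rho>_ge by (simp add: algebra_simps)
  qed
  finally show ?thesis by (simp add: S_def w_add_w)
qed

text \<open>Recentring \<open>f\<close> so that \<open>\<bar>f - c\<bar> \<le> L w\<close> reduces the claim to the two estimates above.\<close>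
lemma contraction:
  assumes L: "L \<ge> 0" and f: "w_lipschitz L f"
  shows "w_lipschitz (\<rho> * L) (P f)"
  unfolding w_lipschitz_def
proof (intro allI impI)
  fix x y :: 's assume "x \<noteq> y"
  obtain c where c: "\<And>z. \<bar>f z - c\<bar> \<le> L * w z" using w_lipschitz_recentre[OF L f] by blast
  define g where "g z = f z - c" for z
  have g: "\<bar>g z\<bar> \<le> L * w z" for z using c by (simp add: g_def)
  have "\<bar>P g x - P g y\<bar> \<le> L * (\<rho> * (w x + w y))"
  proof (cases "V x \<le> 8 * Kc / (1 - lam) \<and> V y \<le> 8 * Kc / (1 - lam)")
    case True then show ?thesis using P_diff_near_atom[OF L g] by blast
  next
    case False
    then have "V x + V y \<ge> 8 * Kc / (1 - lam)" using V_ge_1[of x] V_ge_1[of y] by auto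
    then show ?thesis by (rule P_diff_far[OF L g])
  qed
  moreover have "P f x - P f y = P g x - P g y" by (simp add: g_def[abs_def] P_def)
  ultimately show "\<bar>P f x - P f y\<bar> \<le> \<rho> * L * (w x + w y)" by (simp add: mult_ac)
qed

lemma Pn_0 [simp]: "Pn 0 f x = f x" by (simp add: Pn_def)

lemma Pn_Suc: "Pn (Suc n) f x = Pn n (P f) x"
  unfolding Pn_def P_def by (rule expectation_kstep_Suc[OF finite_support])

lemma Pn_add: "Pn (s + n) f x = Pn s (Pn n f) x"
  unfolding Pn_def kstep_add
  by (rule expectation_bind_pmf_finite[OF finite_set_pmf_kstep' finite_set_pmf_kstep'])

lemma Pn_mono: "(\<And>z. f z \<le> g z) \<Longrightarrow> Pn n f x \<le> Pn n g x"
  unfolding Pn_def by (rule integral_mono) auto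

lemma w_lipschitz_Pn: "L \<ge> 0 \<Longrightarrow> w_lipschitz L f \<Longrightarrow> w_lipschitz (\<rho> ^ n * L) (Pn n f)"
proof (induction n arbitrary: f L)
  case 0 then show ?case by (simp add: Pn_0[abs_def])
next
  case (Suc n)
  have "w_lipschitz (\<rho> ^ n * (\<rho> * L)) (Pn n (P f))"
    using Suc.IH[OF _ contraction[OF Suc.prems]] Suc.prems \<rho>_pos by simp
  then show ?case by (simp add: Pn_Suc[abs_def] mult_ac)
qed

lemma Pn_diff_le:
  assumes "L \<ge> 0" "w_lipschitz L f"
  shows "\<bar>Pn n f x - Pn n f y\<bar> \<le> \<rho> ^ n * L * (w x + w y)"
  using w_lipschitz_Pn[OF assms, of n] assms(1) \<rho>_pos w_ge_1[of x]
  unfolding w_lipschitz_def by (cases "x = y") auto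

lemma Pn_V_le: "Pn n V x \<le> V x + Kc / (1 - lam)"
  unfolding Pn_def
  by (rule expectation_kstep_drift_le[OF finite_support _ drift lam_nonneg lam_less_1])
     (use V_ge_1 Kc_pos in \<open>auto intro: order_trans[OF zero_le_one]\<close>)

definition "C\<^sub>\<theta> = 2 + \<beta> * (2 * V \<theta> + Kc / (1 - lam))"

lemma C\<^sub>\<theta>_pos: "C\<^sub>\<theta> > 0"
  using \<beta>_pos V_ge_1[of \<theta>] Kc_pos lam_less_1 by (simp add: C\<^sub>\<theta>_def add_pos_nonneg)

lemma Pn_theta_cauchy:
  assumes "L \<ge> 0" "w_lipschitz L f"
  shows "\<bar>Pn (n + s) f \<theta> - Pn n f \<theta>\<bar> \<le> L * C\<^sub>\<theta> * \<rho> ^ n"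
proof -
  have "Pn (n + s) f \<theta> - Pn n f \<theta> = Pn s (\<lambda>z. Pn n f z - Pn n f \<theta>) \<theta>"
    unfolding add.commute[of n s] Pn_add by (simp add: Pn_def[of s])
  also have "\<bar>\<dots>\<bar> \<le> Pn s (\<lambda>z. \<bar>Pn n f z - Pn n f \<theta>\<bar>) \<theta>"
    unfolding Pn_def by (rule integral_abs_bound[THEN order_trans]) simp
  also have "\<dots> \<le> Pn s (\<lambda>z. \<rho> ^ n * L * (w z + w \<theta>)) \<theta>"
    by (rule Pn_mono) (rule Pn_diff_le[OF assms])
  also have "\<dots> = \<rho> ^ n * L * (2 + \<beta> * (Pn s V \<theta> + V \<theta>))"
    by (simp add: Pn_def w_def algebra_simps)
  also have "\<dots> \<le> \<rho> ^ n * L * C\<^sub>\<theta>"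
    unfolding C\<^sub>\<theta>_def using Pn_V_le[of s \<theta>] \<beta>_pos \<rho>_pos assms(1)
    by (intro mult_left_mono) auto
  finally show ?thesis by (simp add: mult_ac)
qed

abbreviation "p\<^sub>\<theta> n y \<equiv> pmf (kstep K \<theta> n) y"

lemma Pn_finite_support:
  assumes "finite F" "\<And>y. y \<notin> F \<Longrightarrow> f y = 0"
  shows "Pn n f x = (\<Sum>y\<in>F. f y * pmf (kstep K x n) y)"
  unfolding Pn_def by (rule integral_measure_pmf_real) (use assms in auto)

lemma weighted_cauchy:
  assumes F: "finite F"
  shows "(\<Sum>y\<in>F. \<bar>p\<^sub>\<theta> (n + s) y - p\<^sub>\<theta> n y\<bar> * w y) \<le> C\<^sub>\<theta> * \<rho> ^ n"
proof -
  define f where "f y = (if y \<in> F then sgn (p\<^sub>\<theta> (n + s) y - p\<^sub>\<theta> n y) * w y else 0)" for y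
  have "w_lipschitz 1 f"
    by (rule w_lipschitz_if_bounded) (use w_nonneg in \<open>auto simp: f_def abs_mult abs_sgn_eq\<close>)
  moreover have "Pn (n + s) f \<theta> - Pn n f \<theta> = (\<Sum>y\<in>F. \<bar>p\<^sub>\<theta> (n + s) y - p\<^sub>\<theta> n y\<bar> * w y)"
    by (simp add: Pn_finite_support[OF F] f_def sum_sgn_diff_mult)
  ultimately show ?thesis using Pn_theta_cauchy[of 1 f n s] by simp
qed

lemma abs_le_abs_mult_w: "\<bar>a\<bar> \<le> \<bar>a\<bar> * w y"
  using mult_left_mono[of 1 "w y" "\<bar>a\<bar>"] w_ge_1[of y] by simp

definition "\<mu> y = lim (\<lambda>n. p\<^sub>\<theta> n y)"

lemma p\<^sub>\<theta>_tendsto_\<mu>: "(\<lambda>n. p\<^sub>\<theta> n y) \<longlonglongrightarrow> \<mu> y"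
proof -
  have geometric: "(\<lambda>n. C\<^sub>\<theta> * \<rho> ^ n) \<longlonglongrightarrow> 0"
    using tendsto_mult_right_zero[OF LIMSEQ_power_zero[of \<rho>]] \<rho>_pos \<rho>_less_1 by simp
  have step: "\<bar>p\<^sub>\<theta> (n + s) y - p\<^sub>\<theta> n y\<bar> \<le> C\<^sub>\<theta> * \<rho> ^ n" for n s
    using weighted_cauchy[of "{y}" n s] abs_le_abs_mult_w[of "p\<^sub>\<theta> (n + s) y - p\<^sub>\<theta> n y" y] by simp
  have "Cauchy (\<lambda>n. p\<^sub>\<theta> n y)"
  proof (rule metric_CauchyI)
    fix e :: real assume "e > 0"
    then obtain M where M: "\<And>n. n \<ge> M \<Longrightarrow> C\<^sub>\<theta> * \<rho> ^ n < e"
      using geometric C\<^sub>\<theta>_pos \<rho>_pos by (auto simp: lim_sequentially dist_real_def)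
    have "dist (p\<^sub>\<theta> m y) (p\<^sub>\<theta> n y) < e" if "m \<ge> M" "n \<ge> M" "m \<le> n" for m n
      using step[of m "n - m"] M[of m] that by (simp add: dist_real_def abs_minus_commute)
    then show "\<exists>M. \<forall>m\<ge>M. \<forall>n\<ge>M. dist (p\<^sub>\<theta> m y) (p\<^sub>\<theta> n y) < e"
      by (metis dist_commute nle_le)
  qed
  then show ?thesis unfolding \<mu>_def by (simp add: Cauchy_convergent_iff convergent_LIMSEQ_iff)
qed

lemma \<mu>_nonneg: "\<mu> y \<ge> 0"
  by (rule LIMSEQ_le_const[OF p\<^sub>\<theta>_tendsto_\<mu>]) auto

lemma \<mu>_approx:
  assumes F: "finite F"
  shows "(\<Sum>y\<in>F. \<bar>\<mu> y - p\<^sub>\<theta> n y\<bar> * w y) \<le> C\<^sub>\<theta> * \<rho> ^ n"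
proof -
  have "(\<lambda>s. \<Sum>y\<in>F. \<bar>p\<^sub>\<theta> (s + n) y - p\<^sub>\<theta> n y\<bar> * w y) \<longlonglongrightarrow> (\<Sum>y\<in>F. \<bar>\<mu> y - p\<^sub>\<theta> n y\<bar> * w y)"
    by (intro tendsto_intros LIMSEQ_ignore_initial_segment p\<^sub>\<theta>_tendsto_\<mu>)
  moreover have "(\<Sum>y\<in>F. \<bar>p\<^sub>\<theta> (s + n) y - p\<^sub>\<theta> n y\<bar> * w y) \<le> C\<^sub>\<theta> * \<rho> ^ n" for s
    using weighted_cauchy[OF F, of n s] by (simp add: add.commute)
  ultimately show ?thesis by (intro LIMSEQ_le_const2) auto
qed

lemma \<mu>_approx_abs: "finite F \<Longrightarrow> (\<Sum>y\<in>F. \<bar>\<mu> y - p\<^sub>\<theta> n y\<bar>) \<le> C\<^sub>\<theta> * \<rho> ^ n"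
  using \<mu>_approx[of F n] sum_mono[of F "\<lambda>y. \<bar>\<mu> y - p\<^sub>\<theta> n y\<bar>" "\<lambda>y. \<bar>\<mu> y - p\<^sub>\<theta> n y\<bar> * w y"]
    abs_le_abs_mult_w by fastforce

lemma \<mu>_w_sum_le: "finite F \<Longrightarrow> (\<Sum>y\<in>F. \<mu> y * w y) \<le> C\<^sub>\<theta> + w \<theta>"
proof -
  assume F: "finite F"
  have "(\<Sum>y\<in>F. \<mu> y * w y) \<le> (\<Sum>y\<in>F. \<bar>\<mu> y - p\<^sub>\<theta> 0 y\<bar> * w y + p\<^sub>\<theta> 0 y * w y)"
  proof (intro sum_mono)
    fix y
    have "\<mu> y \<le> \<bar>\<mu> y - p\<^sub>\<theta> 0 y\<bar> + p\<^sub>\<theta> 0 y" by linarith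
    then show "\<mu> y * w y \<le> \<bar>\<mu> y - p\<^sub>\<theta> 0 y\<bar> * w y + p\<^sub>\<theta> 0 y * w y"
      using mult_right_mono[OF _ w_nonneg] by (simp add: distrib_right[symmetric])
  qed
  also have "\<dots> \<le> C\<^sub>\<theta> + (\<Sum>y\<in>F. if y = \<theta> then w \<theta> else 0)"
    unfolding sum.distrib using \<mu>_approx[OF F, of 0]
    by (intro add_mono) (auto simp: pmf_return intro!: sum_mono)
  also have "\<dots> \<le> C\<^sub>\<theta> + w \<theta>" using F w_ge_1[of \<theta>] by (simp add: sum.delta)
  finally show ?thesis .
qed

lemma \<mu>_abs_summable: "\<mu> abs_summable_on UNIV"
proof (rule abs_summable_if_finite_sums_bounded(1))
  fix F :: "'s set" assume F: "finite F"
  have "(\<Sum>x\<in>F. \<bar>\<mu> x\<bar>) \<le> (\<Sum>x\<in>F. \<mu> x * w x)"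
    using abs_le_abs_mult_w \<mu>_nonneg by (intro sum_mono) (metis abs_of_nonneg)
  with \<mu>_w_sum_le[OF F] show "(\<Sum>x\<in>F. \<bar>\<mu> x\<bar>) \<le> C\<^sub>\<theta> + w \<theta>" by simp
qed

lemma \<mu>_sum_eq_1: "infsetsum \<mu> UNIV = 1"
proof (rule eq_0_if_abs_le_geometric[of _ C\<^sub>\<theta> \<rho>, THEN eq_iff_diff_eq_0[THEN iffD2]])
  fix n
  have diff: "(\<lambda>y. \<mu> y - p\<^sub>\<theta> n y) abs_summable_on UNIV"
    "infsetsum (\<lambda>y. \<bar>\<mu> y - p\<^sub>\<theta> n y\<bar>) UNIV \<le> C\<^sub>\<theta> * \<rho> ^ n"
    using abs_summable_if_finite_sums_bounded[OF \<mu>_approx_abs] by auto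
  have "infsetsum \<mu> UNIV - 1 = infsetsum (\<lambda>y. \<mu> y - p\<^sub>\<theta> n y) UNIV"
    using infsetsum_diff[OF \<mu>_abs_summable abs_summable_on_diff[OF \<mu>_abs_summable diff(1), simplified]]
    by (simp add: infsetsum_pmf_eq_1)
  then show "\<bar>infsetsum \<mu> UNIV - 1\<bar> \<le> C\<^sub>\<theta> * \<rho> ^ n"
    using norm_infsetsum_bound[of "\<lambda>y. \<mu> y - p\<^sub>\<theta> n y" UNIV] diff(2) by simp
qed (use \<rho>_pos \<rho>_less_1 in auto)

definition "stat = embed_pmf \<mu>"

lemma pmf_stat: "pmf stat y = \<mu> y"
  unfolding stat_def
proof (rule pmf_embed_pmf)
  show "\<And>x. 0 \<le> \<mu> x" by (rule \<mu>_nonneg)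
  have "(\<integral>\<^sup>+ x. ennreal (\<mu> x) \<partial>count_space UNIV) = ennreal (infsetsum \<mu> UNIV)"
    by (rule nn_integral_conv_infsetsum) (use \<mu>_abs_summable \<mu>_nonneg in auto)
  then show "(\<integral>\<^sup>+ x. ennreal (\<mu> x) \<partial>count_space UNIV) = 1" by (simp add: \<mu>_sum_eq_1)
qed

lemma stat_approx:
  assumes c: "c \<ge> 0" and g: "\<And>z. \<bar>g z\<bar> \<le> c * w z"
  shows "integrable (measure_pmf stat) g"
    and "\<bar>measure_pmf.expectation stat g - Pn n g \<theta>\<bar> \<le> c * C\<^sub>\<theta> * \<rho> ^ n"
proof -
  have weighted: "\<bar>r * g y\<bar> \<le> c * (\<bar>r\<bar> * w y)" for r y
    using mult_left_mono[OF g[of y], of "\<bar>r\<bar>"] by (simp add: abs_mult mult_ac)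
  have stat_summable: "(\<lambda>y. \<mu> y * g y) abs_summable_on UNIV"
  proof (rule abs_summable_if_finite_sums_bounded(1))
    fix F :: "'s set" assume F: "finite F"
    have "(\<Sum>y\<in>F. \<bar>\<mu> y * g y\<bar>) \<le> c * (\<Sum>y\<in>F. \<mu> y * w y)"
      unfolding sum_distrib_left by (intro sum_mono) (metis weighted \<mu>_nonneg abs_of_nonneg)
    also have "\<dots> \<le> c * (C\<^sub>\<theta> + w \<theta>)" using \<mu>_w_sum_le[OF F] c by (rule mult_left_mono)
    finally show "(\<Sum>y\<in>F. \<bar>\<mu> y * g y\<bar>) \<le> c * (C\<^sub>\<theta> + w \<theta>)" .
  qed
  have diff_bound: "(\<Sum>y\<in>F. \<bar>(\<mu> y - p\<^sub>\<theta> n y) * g y\<bar>) \<le> c * C\<^sub>\<theta> * \<rho> ^ n" if F: "finite F" for F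
  proof -
    have "(\<Sum>y\<in>F. \<bar>(\<mu> y - p\<^sub>\<theta> n y) * g y\<bar>) \<le> c * (\<Sum>y\<in>F. \<bar>\<mu> y - p\<^sub>\<theta> n y\<bar> * w y)"
      unfolding sum_distrib_left by (intro sum_mono weighted)
    also have "\<dots> \<le> c * (C\<^sub>\<theta> * \<rho> ^ n)" using \<mu>_approx[OF F, of n] c by (rule mult_left_mono)
    finally show ?thesis by (simp add: mult_ac)
  qed
  note diff = abs_summable_if_finite_sums_bounded[OF diff_bound]
  have kstep_summable: "(\<lambda>y. p\<^sub>\<theta> n y * g y) abs_summable_on UNIV"
    using abs_summable_on_diff[OF stat_summable diff(1)] by (simp add: algebra_simps)
  show "integrable (measure_pmf stat) g"
    unfolding integrable_measure_pmf_iff_abs_summable pmf_stat by (rule stat_summable)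
  have "measure_pmf.expectation stat g - Pn n g \<theta>
          = infsetsum (\<lambda>y. \<mu> y * g y) UNIV - infsetsum (\<lambda>y. p\<^sub>\<theta> n y * g y) UNIV"
    by (simp add: pmf_expectation_eq_infsetsum Pn_def pmf_stat)
  also have "\<dots> = infsetsum (\<lambda>y. (\<mu> y - p\<^sub>\<theta> n y) * g y) UNIV"
    by (subst infsetsum_diff[symmetric, OF stat_summable kstep_summable]) (simp add: algebra_simps)
  finally have "measure_pmf.expectation stat g - Pn n g \<theta> = infsetsum (\<lambda>y. (\<mu> y - p\<^sub>\<theta> n y) * g y) UNIV" .
  then show "\<bar>measure_pmf.expectation stat g - Pn n g \<theta>\<bar> \<le> c * C\<^sub>\<theta> * \<rho> ^ n"
    using norm_infsetsum_bound[of "\<lambda>y. (\<mu> y - p\<^sub>\<theta> n y) * g y" UNIV] diff(2) by simp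
qed

lemma Pn_tendsto_stat:
  assumes c: "c \<ge> 0" and g: "\<And>z. \<bar>g z\<bar> \<le> c * w z"
  shows "\<bar>Pn n g x - measure_pmf.expectation stat g\<bar> \<le> c * (w x + w \<theta> + C\<^sub>\<theta>) * \<rho> ^ n"
  using Pn_diff_le[OF c w_lipschitz_if_bounded[OF g], of n x \<theta>] stat_approx(2)[OF c g, of n]
  by (simp add: algebra_simps abs_le_iff)

definition "M\<^sub>V = (1 + \<beta> + w \<theta> + C\<^sub>\<theta>) / \<beta>"

lemma M\<^sub>V_pos: "M\<^sub>V > 0"
  using \<beta>_pos w_nonneg[of \<theta>] C\<^sub>\<theta>_pos by (simp add: M\<^sub>V_def)

lemma geometric_convergence_V:
  assumes g: "\<And>z. \<bar>g z\<bar> \<le> C * V z"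
  shows "integrable (measure_pmf stat) g"
    and "\<bar>Pn n g x - measure_pmf.expectation stat g\<bar> \<le> C * M\<^sub>V * (1 + V x) * \<rho> ^ n"
proof -
  have "0 \<le> C * V \<theta>" using g[of \<theta>] by (meson abs_ge_zero order_trans)
  then have C: "C \<ge> 0" using V_ge_1[of \<theta>] by (simp add: zero_le_mult_iff)
  have c: "C / \<beta> \<ge> 0" using C \<beta>_pos by simp
  have gw: "\<bar>g z\<bar> \<le> C / \<beta> * w z" for z
  proof -
    have "C / \<beta> * w z = C / \<beta> + C * V z" using \<beta>_pos by (simp add: w_def field_simps)
    then show ?thesis using g[of z] c by linarith
  qed
  show "integrable (measure_pmf stat) g" by (rule stat_approx(1)[OF c gw])
  have "\<beta> * M\<^sub>V * (1 + V x) = (w x + w \<theta> + C\<^sub>\<theta>) + (\<beta> + V x + (w \<theta> + C\<^sub>\<theta>) * V x)"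
  proof -
    have "\<beta> * M\<^sub>V = 1 + \<beta> + w \<theta> + C\<^sub>\<theta>" using \<beta>_pos by (simp add: M\<^sub>V_def)
    then show ?thesis by (simp add: w_def[of x] algebra_simps)
  qed
  moreover have "\<beta> + V x + (w \<theta> + C\<^sub>\<theta>) * V x \<ge> 0"
    using \<beta>_pos V_ge_1[of x] w_nonneg[of \<theta>] C\<^sub>\<theta>_pos by simp
  ultimately have "w x + w \<theta> + C\<^sub>\<theta> \<le> \<beta> * M\<^sub>V * (1 + V x)" by linarith
  then have "C / \<beta> * (w x + w \<theta> + C\<^sub>\<theta>) \<le> C * M\<^sub>V * (1 + V x)"
    using mult_left_mono[OF _ c] \<beta>_pos by (fastforce simp: field_simps)
  then show "\<bar>Pn n g x - measure_pmf.expectation stat g\<bar> \<le> C * M\<^sub>V * (1 + V x) * \<rho> ^ n"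
    using Pn_tendsto_stat[OF c gw, of n x] \<rho>_pos
    by (meson mult_right_mono order_trans zero_le_power less_imp_le)
qed

lemma pmf_kstep_approx: "\<bar>pmf (kstep K x n) y - \<mu> y\<bar> \<le> (w x + w \<theta> + C\<^sub>\<theta>) * \<rho> ^ n"
proof -
  define g where "g z = (if z = y then 1 else (0::real))" for z
  have g: "\<bar>g z\<bar> \<le> 1 * w z" for z using w_ge_1[of z] by (auto simp: g_def)
  have "Pn n g x = pmf (kstep K x n) y" by (subst Pn_finite_support[of "{y}"]) (auto simp: g_def)
  moreover have "measure_pmf.expectation stat g = \<mu> y"
    by (subst integral_measure_pmf_real[of "{y}"]) (auto simp: g_def pmf_stat split: if_splits)
  ultimately show ?thesis using Pn_tendsto_stat[OF _ g, of n x] by simp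
qed

lemma stationary_stat: "stationary K stat"
  unfolding stationary_def
proof (rule pmf_eqI)
  fix y
  define g where "g x = pmf (K x) y" for x
  have g: "\<bar>g z\<bar> \<le> 1 * w z" for z using w_ge_1[of z] pmf_le_1[of "K z" y] by (simp add: g_def)
  have "\<bar>measure_pmf.expectation stat g - \<mu> y\<bar> \<le> (2 * C\<^sub>\<theta>) * \<rho> ^ n" for n
  proof -
    have "Pn n g \<theta> = p\<^sub>\<theta> (Suc n) y" by (simp add: g_def[abs_def] Pn_def pmf_bind)
    then have "\<bar>measure_pmf.expectation stat g - p\<^sub>\<theta> (Suc n) y\<bar> \<le> C\<^sub>\<theta> * \<rho> ^ n"
      using stat_approx(2)[OF _ g, of n] by simp
    moreover have "\<bar>p\<^sub>\<theta> (Suc n) y - \<mu> y\<bar> \<le> C\<^sub>\<theta> * \<rho> ^ n"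
    proof -
      have "C\<^sub>\<theta> * \<rho> ^ Suc n \<le> C\<^sub>\<theta> * \<rho> ^ n"
        using \<rho>_pos \<rho>_less_1 C\<^sub>\<theta>_pos by (intro mult_left_mono power_decreasing) auto
      then show ?thesis using \<mu>_approx_abs[of "{y}" "Suc n"] by (simp add: abs_minus_commute)
    qed
    ultimately show ?thesis by simp
  qed
  then show "pmf (bind_pmf stat K) y = pmf stat y"
    using eq_0_if_abs_le_geometric[of "measure_pmf.expectation stat g - \<mu> y" "2 * C\<^sub>\<theta>" \<rho>] \<rho>_pos \<rho>_less_1
    by (simp add: pmf_stat pmf_bind g_def[abs_def])
qed

lemma stationary_unique:
  assumes "stationary K \<pi>'" shows "\<pi>' = stat"
proof (rule pmf_eqI)
  fix y
  define h where "h n z = pmf (kstep K z n) y" for n z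
  have "pmf \<pi>' y = measure_pmf.expectation \<pi>' (h n)" for n
    using stationary_bind_kstep[OF assms, of n] unfolding h_def by (metis pmf_bind)
  moreover have "(\<lambda>n. measure_pmf.expectation \<pi>' (h n)) \<longlonglongrightarrow> measure_pmf.expectation \<pi>' (\<lambda>z. \<mu> y)"
  proof (rule integral_dominated_convergence[where w = "\<lambda>_. 1"])
    show "AE z in measure_pmf \<pi>'. (\<lambda>n. h n z) \<longlonglongrightarrow> \<mu> y"
    proof (rule AE_I2)
      fix z
      have "(\<lambda>n. (w z + w \<theta> + C\<^sub>\<theta>) * \<rho> ^ n) \<longlonglongrightarrow> 0"
        using tendsto_mult_right_zero[OF LIMSEQ_power_zero[of \<rho>]] \<rho>_pos \<rho>_less_1 by simp
      then have "(\<lambda>n. h n z - \<mu> y) \<longlonglongrightarrow> 0"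
        by (rule Lim_null_comparison[rotated]) (use pmf_kstep_approx in \<open>simp add: h_def\<close>)
      then show "(\<lambda>n. h n z) \<longlonglongrightarrow> \<mu> y" by (simp add: LIM_zero_iff)
    qed
    show "\<And>n. AE z in measure_pmf \<pi>'. norm (h n z) \<le> 1" by (simp add: h_def pmf_le_1)
  qed simp_all
  ultimately show "pmf \<pi>' y = pmf stat y"
    by (simp add: pmf_stat LIMSEQ_const_iff)
qed

lemma tv_dist_kstep_stat_le: "tv_dist (kstep K x n) stat \<le> (w x + w \<theta> + C\<^sub>\<theta>) * \<rho> ^ n"
proof -
  let ?D = "\<lambda>y. pmf (kstep K x n) y - pmf stat y"
  have bound: "(\<Sum>y\<in>F. \<bar>?D y\<bar>) \<le> (w x + w \<theta> + C\<^sub>\<theta>) * \<rho> ^ n" if F: "finite F" for F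
  proof -
    define g where "g y = (if y \<in> F then sgn (?D y) else 0)" for y
    have g: "\<bar>g z\<bar> \<le> 1 * w z" for z using w_ge_1[of z] by (auto simp: g_def abs_sgn_eq)
    have "measure_pmf.expectation stat g = (\<Sum>y\<in>F. g y * pmf stat y)"
      by (rule integral_measure_pmf_real[OF F]) (auto simp: g_def split: if_splits)
    then have "Pn n g x - measure_pmf.expectation stat g = (\<Sum>y\<in>F. \<bar>?D y\<bar>)"
      using sum_sgn_diff_mult[of "pmf (kstep K x n)" "pmf stat" "\<lambda>_. 1" F]
      by (simp add: Pn_finite_support[OF F] g_def)
    then show ?thesis using Pn_tendsto_stat[OF _ g, of n x] by simp
  qed
  have "tv_dist (kstep K x n) stat = infsetsum (\<lambda>y. \<bar>?D y\<bar>) UNIV"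
    unfolding tv_dist_def
    by (rule infsetsum_infsum[symmetric])
       (use abs_summable_if_finite_sums_bounded(1)[OF bound] in \<open>simp add: abs_summable_on_def\<close>)
  also have "\<dots> \<le> (w x + w \<theta> + C\<^sub>\<theta>) * \<rho> ^ n" by (rule abs_summable_if_finite_sums_bounded(2)[OF bound])
  finally show ?thesis .
qed

lemma stat_moment:
  fixes U :: "'s \<Rightarrow> real"
  assumes U_nonneg: "\<And>x. U x \<ge> 0" and bounded: "\<And>n. Pn n U \<theta> \<le> B"
  shows "integrable (measure_pmf stat) U" "measure_pmf.expectation stat U \<le> B"
proof -
  have finite_sums: "(\<Sum>y\<in>F. \<bar>\<mu> y * U y\<bar>) \<le> B" if F: "finite F" for F
  proof -
    have "(\<lambda>n. \<Sum>y\<in>F. U y * p\<^sub>\<theta> n y) \<longlonglongrightarrow> (\<Sum>y\<in>F. U y * \<mu> y)"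
      by (intro tendsto_intros p\<^sub>\<theta>_tendsto_\<mu>)
    moreover have "(\<Sum>y\<in>F. U y * p\<^sub>\<theta> n y) \<le> B" for n
    proof -
      have "(\<Sum>y\<in>F. U y * p\<^sub>\<theta> n y) \<le> (\<Sum>y\<in>F \<union> set_pmf (kstep K \<theta> n). U y * p\<^sub>\<theta> n y)"
        by (rule sum_mono2) (use F finite_set_pmf_kstep' U_nonneg in auto)
      also have "\<dots> = Pn n U \<theta>"
        unfolding Pn_def by (rule integral_measure_pmf_real[symmetric]) (use F finite_set_pmf_kstep' in auto)
      finally show ?thesis using bounded[of n] by simp
    qed
    ultimately have "(\<Sum>y\<in>F. U y * \<mu> y) \<le> B" by (intro LIMSEQ_le_const2) auto
    then show ?thesis using \<mu>_nonneg U_nonneg by (simp add: abs_mult mult.commute)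
  qed
  note summable = abs_summable_if_finite_sums_bounded[OF finite_sums]
  show "integrable (measure_pmf stat) U"
    unfolding integrable_measure_pmf_iff_abs_summable pmf_stat by (rule summable(1))
  have "measure_pmf.expectation stat U = infsetsum (\<lambda>y. \<bar>\<mu> y * U y\<bar>) UNIV"
    using \<mu>_nonneg U_nonneg by (simp add: pmf_expectation_eq_infsetsum pmf_stat abs_mult)
  then show "measure_pmf.expectation stat U \<le> B" using summable(2) by simp
qed

end

section \<open>Paths and hitting times\<close>

lemma set_path_pmf: "xs \<in> set_pmf (path_pmf K x n) \<Longrightarrow> length xs = Suc n \<and> hd xs = x"
  by (induction n arbitrary: xs) (fastforce simp: hd_append)+

lemma finite_set_path_pmf: "(\<And>x. finite (set_pmf (K x))) \<Longrightarrow> finite (set_pmf (path_pmf K x n))"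
  by (induction n) auto

lemma path_pmf_Suc_Cons:
  "path_pmf K x (Suc n) = bind_pmf (K x) (\<lambda>y. map_pmf (\<lambda>ys. x # ys) (path_pmf K y n))"
proof (induction n arbitrary: x)
  case 0
  show ?case by (simp add: map_pmf_def bind_return_pmf)
next
  case (Suc n)
  define G where "G xs = map_pmf (\<lambda>y. xs @ [y]) (K (last xs))" for xs
  have G_Cons: "bind_pmf (map_pmf ((#) x) (path_pmf K y n)) G = map_pmf ((#) x) (path_pmf K y (Suc n))" for y
  proof -
    have "bind_pmf (map_pmf ((#) x) (path_pmf K y n)) G = bind_pmf (path_pmf K y n) (\<lambda>ys. G (x # ys))"
      by (simp add: map_pmf_def bind_assoc_pmf bind_return_pmf)
    also have "\<dots> = bind_pmf (path_pmf K y n) (\<lambda>ys. map_pmf ((#) x) (G ys))"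
    proof (rule bind_pmf_cong[OF refl])
      fix ys assume "ys \<in> set_pmf (path_pmf K y n)"
      then have "ys \<noteq> []" using set_path_pmf[of ys K y n] by auto
      then show "G (x # ys) = map_pmf ((#) x) (G ys)" by (simp add: G_def pmf.map_comp o_def)
    qed
    also have "\<dots> = map_pmf ((#) x) (path_pmf K y (Suc n))" by (simp add: G_def map_bind_pmf)
    finally show ?thesis .
  qed
  have "path_pmf K x (Suc (Suc n)) = bind_pmf (path_pmf K x (Suc n)) G"
    unfolding G_def by (rule path_pmf.simps(2))
  also have "\<dots> = bind_pmf (K x) (\<lambda>y. bind_pmf (map_pmf ((#) x) (path_pmf K y n)) G)"
    by (subst Suc.IH) (simp only: bind_assoc_pmf)
  finally show ?case by (simp only: G_Cons)
qed

lemma pmf_kstep_pos_if_in_path: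
  assumes fin: "\<And>x. finite (set_pmf (K x))"
  shows "ys \<in> set_pmf (path_pmf K y n) \<Longrightarrow> j \<le> n \<Longrightarrow> pmf (kstep K y j) (ys ! j) > 0"
proof (induction n arbitrary: ys j)
  case 0 then show ?case by simp
next
  case (Suc n)
  then obtain zs z where zs: "zs \<in> set_pmf (path_pmf K y n)" "z \<in> set_pmf (K (last zs))" "ys = zs @ [z]"
    by auto
  have len: "length zs = Suc n" using set_path_pmf[OF zs(1)] by simp
  show ?case
  proof (cases "j \<le> n")
    case True
    then show ?thesis using Suc.IH[OF zs(1) True] zs(3) len by (simp add: nth_append)
  next
    case False
    then have j: "j = Suc n" "ys ! j = z" using Suc.prems zs(3) len by (auto simp: nth_append)
    have last: "last zs = zs ! n" using len by (cases zs rule: rev_cases) auto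
    have "pmf (kstep K y n) (zs ! n) * pmf (K (zs ! n)) z > 0"
      using Suc.IH[OF zs(1), of n] zs(2) by (simp add: last pmf_positive)
    also have "\<dots> \<le> pmf (kstep K y (Suc n)) z"
      unfolding kstep.simps by (rule pmf_bind_ge[OF finite_set_pmf_kstep[OF fin]])
    finally show ?thesis using j by simp
  qed
qed

lemma hit_trunc_0: "hit_trunc \<theta> 0 xs = 0"
  by (auto simp: hit_trunc_def)

lemma hit_trunc_Cons:
  "hit_trunc \<theta> (Suc n) (x # ys) = (if x = \<theta> then 0 else Suc (hit_trunc \<theta> n ys))"
proof (cases "x = \<theta>")
  case True
  then show ?thesis unfolding hit_trunc_def by (auto intro!: Least_equality)
next
  case False
  have hits: "(\<exists>t\<le>Suc n. (x # ys) ! t = \<theta>) \<longleftrightarrow> (\<exists>t\<le>n. ys ! t = \<theta>)"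
  proof
    assume "\<exists>t\<le>Suc n. (x # ys) ! t = \<theta>"
    then obtain t where "t \<le> Suc n" "(x # ys) ! t = \<theta>" by blast
    with False show "\<exists>t\<le>n. ys ! t = \<theta>" by (cases t) auto
  next
    assume "\<exists>t\<le>n. ys ! t = \<theta>"
    then obtain t where "t \<le> n" "ys ! t = \<theta>" by blast
    then show "\<exists>t\<le>Suc n. (x # ys) ! t = \<theta>" by (intro exI[of _ "Suc t"]) auto
  qed
  show ?thesis
  proof (cases "\<exists>t\<le>n. ys ! t = \<theta>")
    case True
    then obtain t where "ys ! t = \<theta>" by blast
    then have "(LEAST t. (x # ys) ! t = \<theta>) = Suc (LEAST t. ys ! t = \<theta>)"
      using False by (subst Least_Suc[of _ "Suc t"]) auto
    then show ?thesis using True hits False unfolding hit_trunc_def by simp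
  next
    case no_hit: False
    then have "hit_trunc \<theta> (Suc n) (x # ys) = Suc n"
      using hits unfolding hit_trunc_def by (intro if_not_P) simp
    moreover have "hit_trunc \<theta> n ys = n" unfolding hit_trunc_def using no_hit by (rule if_not_P)
    ultimately show ?thesis using False by simp
  qed
qed

lemma nn_integral_measure_pmf_finite:
  fixes U :: "'a \<Rightarrow> real"
  assumes "finite (set_pmf M)" "\<And>x. U x \<ge> 0"
  shows "(\<integral>\<^sup>+ y. ennreal (U y) \<partial>measure_pmf M) = ennreal (measure_pmf.expectation M U)"
  using assms by (intro nn_integral_eq_integral integrable_measure_pmf_finite) auto

lemma nn_integral_exp_hit_trunc_le:
  fixes U :: "'s \<Rightarrow> real"
  assumes fin: "\<And>x. finite (set_pmf (K x))" and U_ge_1: "\<And>x. U x \<ge> 1"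
    and drift: "\<And>x. x \<noteq> \<theta> \<Longrightarrow> exp b * measure_pmf.expectation (K x) U \<le> U x"
  shows "(\<integral>\<^sup>+ xs. ennreal (exp (b * real (hit_trunc \<theta> n xs))) \<partial>measure_pmf (path_pmf K x n))
           \<le> ennreal (U x)"
proof (induction n arbitrary: x)
  case 0
  show ?case using U_ge_1[of x] by (simp add: hit_trunc_0)
next
  case (Suc n)
  show ?case
  proof (cases "x = \<theta>")
    case True
    then show ?thesis using U_ge_1[of x]
      unfolding path_pmf_Suc_Cons by (simp add: hit_trunc_Cons measure_pmf.emeasure_space_1)
  next
    case False
    have "(\<integral>\<^sup>+ xs. ennreal (exp (b * real (hit_trunc \<theta> (Suc n) xs))) \<partial>measure_pmf (path_pmf K x (Suc n)))
       = (\<integral>\<^sup>+ y. \<integral>\<^sup>+ ys. ennreal (exp b) * ennreal (exp (b * real (hit_trunc \<theta> n ys)))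
            \<partial>measure_pmf (path_pmf K y n) \<partial>measure_pmf (K x))"
      unfolding path_pmf_Suc_Cons
      by (simp add: hit_trunc_Cons False ennreal_mult'[symmetric] exp_add[symmetric] algebra_simps)
    also have "\<dots> = (\<integral>\<^sup>+ y. ennreal (exp b) * \<integral>\<^sup>+ ys. ennreal (exp (b * real (hit_trunc \<theta> n ys)))
            \<partial>measure_pmf (path_pmf K y n) \<partial>measure_pmf (K x))"
      by (simp add: nn_integral_cmult)
    also have "\<dots> \<le> (\<integral>\<^sup>+ y. ennreal (exp b) * ennreal (U y) \<partial>measure_pmf (K x))"
      by (intro nn_integral_mono mult_left_mono Suc.IH) auto
    also have "\<dots> = ennreal (exp b * measure_pmf.expectation (K x) U)"
      using U_ge_1 by (simp add: nn_integral_cmult nn_integral_measure_pmf_finite[OF fin]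
          order_trans[OF zero_le_one] ennreal_mult')
    also have "\<dots> \<le> ennreal (U x)" by (intro ennreal_leI drift False)
    finally show ?thesis .
  qed
qed

lemma nn_integral_sum_hit_trunc_le:
  fixes H s :: "'s \<Rightarrow> real"
  assumes fin: "\<And>x. finite (set_pmf (K x))" and H_nonneg: "\<And>x. H x \<ge> 0"
    and s_nonneg: "\<And>x. s x \<ge> 0" and s_\<theta>: "s \<theta> = 0"
    and poisson: "\<And>x. x \<noteq> \<theta> \<Longrightarrow> s x + measure_pmf.expectation (K x) H \<le> H x"
  shows "(\<integral>\<^sup>+ xs. ennreal (\<Sum>t\<le>hit_trunc \<theta> n xs. s (xs ! t)) \<partial>measure_pmf (path_pmf K x n))
           \<le> ennreal (H x)"
proof (induction n arbitrary: x)
  case 0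
  have "measure_pmf.expectation (K x) H \<ge> 0" by (rule integral_nonneg_AE) (use H_nonneg in auto)
  then have "s x \<le> H x" using s_\<theta> H_nonneg[of x] poisson[of x] by (cases "x = \<theta>") auto
  then show ?case by (simp add: hit_trunc_0 ennreal_leI)
next
  case (Suc n)
  show ?case
  proof (cases "x = \<theta>")
    case True
    then show ?thesis unfolding path_pmf_Suc_Cons by (simp add: hit_trunc_Cons s_\<theta>)
  next
    case False
    have shift: "(\<Sum>t\<le>Suc m. s ((x # ys) ! t)) = s x + (\<Sum>t\<le>m. s (ys ! t))" for m ys
      by (simp add: sum.atMost_Suc_shift del: sum.atMost_Suc)
    have "(\<integral>\<^sup>+ xs. ennreal (\<Sum>t\<le>hit_trunc \<theta> (Suc n) xs. s (xs ! t)) \<partial>measure_pmf (path_pmf K x (Suc n)))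
       = (\<integral>\<^sup>+ y. \<integral>\<^sup>+ ys. ennreal (s x) + ennreal (\<Sum>t\<le>hit_trunc \<theta> n ys. s (ys ! t))
            \<partial>measure_pmf (path_pmf K y n) \<partial>measure_pmf (K x))"
      unfolding path_pmf_Suc_Cons
      by (simp add: hit_trunc_Cons False shift s_nonneg sum_nonneg ennreal_plus[symmetric]
          del: ennreal_plus sum.atMost_Suc)
    also have "\<dots> = (\<integral>\<^sup>+ y. ennreal (s x) + \<integral>\<^sup>+ ys. ennreal (\<Sum>t\<le>hit_trunc \<theta> n ys. s (ys ! t))
            \<partial>measure_pmf (path_pmf K y n) \<partial>measure_pmf (K x))"
      by (intro nn_integral_cong) (simp add: nn_integral_add measure_pmf.emeasure_space_1)
    also have "\<dots> \<le> (\<integral>\<^sup>+ y. ennreal (s x) + ennreal (H y) \<partial>measure_pmf (K x))"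
      by (intro nn_integral_mono add_left_mono Suc.IH)
    also have "\<dots> = ennreal (s x + measure_pmf.expectation (K x) H)"
      using H_nonneg s_nonneg[of x]
      by (simp add: nn_integral_add nn_integral_measure_pmf_finite[OF fin] measure_pmf.emeasure_space_1
          integral_nonneg_AE ennreal_plus)
    also have "\<dots> \<le> ennreal (H x)" by (intro ennreal_leI poisson False)
    finally show ?thesis .
  qed
qed

lemma hit_expect_exp_le:
  fixes U :: "'s \<Rightarrow> real"
  assumes "\<And>x. finite (set_pmf (K x))" "\<And>x. U x \<ge> 1"
    and "\<And>x. x \<noteq> \<theta> \<Longrightarrow> exp b * measure_pmf.expectation (K x) U \<le> U x"
  shows "hit_expect K \<theta> (return_pmf x) (\<lambda>\<tau> xs. ennreal (exp (b * real \<tau>))) \<le> ennreal (U x)"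
  unfolding hit_expect_def path_from_def bind_return_pmf
  by (rule SUP_least) (rule nn_integral_exp_hit_trunc_le[OF assms])

lemma hit_expect_sum_le:
  fixes H s :: "'s \<Rightarrow> real"
  assumes "\<And>x. finite (set_pmf (K x))" "\<And>x. H x \<ge> 0" "\<And>x. s x \<ge> 0" "s \<theta> = 0"
    and "\<And>x. x \<noteq> \<theta> \<Longrightarrow> s x + measure_pmf.expectation (K x) H \<le> H x"
  shows "hit_expect K \<theta> mu (\<lambda>\<tau> xs. ennreal (\<Sum>t\<le>\<tau>. s (xs ! t))) \<le> (\<integral>\<^sup>+ x. ennreal (H x) \<partial>measure_pmf mu)"
  unfolding hit_expect_def path_from_def
  by (rule SUP_least) (simp add: nn_integral_mono nn_integral_sum_hit_trunc_le[OF assms])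

section \<open>Chains that can jump to an atom from every state\<close>

lemma accessible_trans:
  assumes fin: "\<And>x. finite (set_pmf (K x))"
    and "accessible K x y" "accessible K y z"
  shows "accessible K x z"
proof -
  obtain m n where m: "pmf (kstep K x m) y > 0" and n: "pmf (kstep K y n) z > 0"
    using assms(2,3) by (auto simp: accessible_def)
  have "0 < pmf (kstep K x m) y * pmf (kstep K y n) z" using m n by simp
  also have "\<dots> \<le> pmf (kstep K x (m + n)) z"
    unfolding kstep_add by (rule pmf_bind_ge[OF finite_set_pmf_kstep[OF fin]])
  finally show ?thesis by (auto simp: accessible_def)
qed

lemma accessible_if_pmf_pos: "pmf (K x) y > 0 \<Longrightarrow> accessible K x y"
  unfolding accessible_def by (intro exI[of _ 1]) (simp add: bind_return_pmf)

lemma closed_set_communicating_class: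
  assumes "\<And>x. finite (set_pmf (K x))" "\<And>x. accessible K x \<theta>"
  shows "closed_set K (communicating_class K \<theta>)"
  unfolding closed_set_def communicating_class_def using accessible_trans[of K, OF assms(1)] assms(2) by blast

lemma period_eq_1_if_pmf_pos: "pmf (K \<theta>) \<theta> > 0 \<Longrightarrow> period K \<theta> = 1"
  unfolding period_def
  by (rule Gcd_nat_eq_one) (auto simp: bind_return_pmf intro!: exI[of _ 1])

lemma prob_path_visits_eq_0:
  assumes "\<And>x. finite (set_pmf (K x))" "\<not> accessible K y x"
  shows "measure_pmf.prob (path_pmf K y m) {ys. \<exists>j\<le>m. ys ! j = x} = 0"
  unfolding measure_pmf_zero_iff
  using pmf_kstep_pos_if_in_path[OF assms(1)] assms(2) by (fastforce simp: accessible_def)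

text \<open>A state outside the class of \<open>\<theta>\<close> is left for good whenever the first step goes to \<open>\<theta>\<close>.\<close>
lemma prob_return_le:
  assumes fin: "\<And>x. finite (set_pmf (K x))" and not_acc: "\<not> accessible K \<theta> x"
  shows "measure_pmf.prob (path_pmf K x n) {xs. \<exists>t\<in>{1..n}. xs ! t = x} \<le> 1 - pmf (K x) \<theta>"
proof (cases n)
  case 0 then show ?thesis by (simp add: pmf_le_1)
next
  case (Suc m)
  define A where "A = {xs. \<exists>t\<in>{1..n}. xs ! t = x}"
  define h where "h y = measure_pmf.prob (path_pmf K y m) {ys. \<exists>j\<le>m. ys ! j = x}" for y
  have A_Cons: "(#) x -` A = {ys. \<exists>j\<le>m. ys ! j = x}"
  proof (intro set_eqI iffI)
    fix ys assume "ys \<in> (#) x -` A"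
    then obtain t where "t \<in> {1..Suc m}" "(x # ys) ! t = x" by (auto simp: A_def Suc)
    then show "ys \<in> {ys. \<exists>j\<le>m. ys ! j = x}" by (cases t) auto
  next
    fix ys assume "ys \<in> {ys. \<exists>j\<le>m. ys ! j = x}"
    then obtain j where "j \<le> m" "ys ! j = x" by blast
    then show "ys \<in> (#) x -` A" by (auto simp: A_def Suc intro!: bexI[of _ "Suc j"])
  qed
  have "measure_pmf.prob (path_pmf K x n) A = measure_pmf.expectation (path_pmf K x n) (indicator A)"
    by simp
  also have "\<dots> = measure_pmf.expectation (K x)
                    (\<lambda>y. measure_pmf.expectation (map_pmf ((#) x) (path_pmf K y m)) (indicator A))"
    unfolding Suc path_pmf_Suc_Cons
    by (rule expectation_bind_pmf_finite[OF fin]) (simp add: finite_set_path_pmf[OF fin])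
  also have "\<dots> = measure_pmf.expectation (K x) h"
    by (simp add: h_def[abs_def] A_Cons)
  also have "\<dots> \<le> measure_pmf.expectation (K x) (\<lambda>y. 1 - indicator {\<theta>} y)"
  proof (rule integral_mono)
    fix y
    show "h y \<le> 1 - indicator {\<theta>} y"
      using prob_path_visits_eq_0[OF fin not_acc, of m] by (cases "y = \<theta>") (auto simp: h_def)
  qed (auto intro: integrable_measure_pmf_finite[OF fin])
  also have "\<dots> = 1 - pmf (K x) \<theta>"
    by (simp add: measure_pmf_single integrable_measure_pmf_finite[OF fin])
  finally show ?thesis by (simp add: A_def)
qed

lemma transient_if_not_accessible:
  assumes "\<And>x. finite (set_pmf (K x))" "\<not> accessible K \<theta> x" "pmf (K x) \<theta> > 0"
  shows "transient K x"
proof -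
  have "return_prob K x \<le> 1 - pmf (K x) \<theta>"
    unfolding return_prob_def by (rule cSUP_least) (use prob_return_le[OF assms(1,2)] in auto)
  then show ?thesis using assms(3) by (simp add: transient_def)
qed

section \<open>The processor sharing chain\<close>

lemma binomial_pmf_expectation_exp:
  assumes "0 \<le> r" "r \<le> 1"
  shows "measure_pmf.expectation (binomial_pmf n r) (\<lambda>d. exp (a * real (n - d))) = (r + exp a * (1 - r)) ^ n"
proof -
  have "measure_pmf.expectation (binomial_pmf n r) (\<lambda>d. exp (a * real (n - d)))
      = (\<Sum>k\<le>n. exp (a * real (n - k)) * ((n choose k) * r ^ k * (1 - r) ^ (n - k)))"
    by (subst integral_measure_pmf_real[of "{..n}"])
       (use assms in \<open>auto simp: set_pmf_binomial_eq split: if_splits\<close>)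
  also have "\<dots> = (\<Sum>k\<le>n. (n choose k) * r ^ k * (exp a * (1 - r)) ^ (n - k))"
    by (rule sum.cong) (auto simp: exp_of_nat_mult[symmetric] power_mult_distrib mult.commute)
  also have "\<dots> = (r + exp a * (1 - r)) ^ n" by (subst binomial_ring) (simp add: atLeast0AtMost)
  finally show ?thesis .
qed

lemma exp_le_Phi: "exp (a * real (x i)) \<le> Phi a x"
  unfolding Phi_def by (rule member_le_sum) auto

lemma Phi_ge_1:
  assumes "a \<ge> 0" shows "Phi a x \<ge> 1"
proof -
  obtain i where "i \<in> (UNIV :: 'a set)" by blast
  have "1 \<le> exp (a * real (x i))" using assms by simp
  then show ?thesis using exp_le_Phi[of a x i] by linarith
qed

lemma real_le_Phi_div:
  assumes "a > 0" shows "real (x i) \<le> Phi a x / a"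
proof -
  have "a * real (x i) \<le> Phi a x"
    using exp_le_Phi[of a x i] exp_ge_add_one_self[of "a * real (x i)"] by linarith
  then show ?thesis using assms by (simp add: field_simps)
qed

locale queue_model =
  fixes p a :: real and q :: "'i::{finite,linorder} \<Rightarrow> real"
  assumes p_pos: "0 < p" and p_lt1: "p < 1"
    and q_lt1: "\<forall>i. q i < 1"
    and q_dec: "\<forall>i j. i < j \<longrightarrow> q j < q i"
    and q_gt: "2 * p < q (Max UNIV)"
    and a_pos: "a > 0"
    and a_cond: "p * (exp a - 1) < q (Max UNIV) / 2 * (1 - exp (- a))"
begin

definition "qmin = q (Max UNIV)"
definition "\<epsilon> = p * (exp a - 1)"
definition "gap = qmin * (1 - exp (- a))"
definition "decay = exp (- gap) * (1 + \<epsilon>)"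

definition departures :: "'i qstate \<Rightarrow> 'i \<Rightarrow> nat pmf" where
  "departures x i = (if x i = 0 then return_pmf 0 else binomial_pmf (x i) (q i / real (x i)))"
definition arrival :: "('i qstate \<Rightarrow> 'i) \<Rightarrow> 'i qstate \<Rightarrow> bool \<Rightarrow> 'i \<Rightarrow> nat" where
  "arrival v x \<xi> i = (if v x = i \<and> \<xi> then 1 else 0)"
definition next_state :: "('i qstate \<Rightarrow> 'i) \<Rightarrow> 'i qstate \<Rightarrow> bool \<Rightarrow> 'i qstate \<Rightarrow> 'i qstate" where
  "next_state v x \<xi> D = (\<lambda>i. x i - D i + arrival v x \<xi> i)"
definition mgf_dep :: "'i qstate \<Rightarrow> 'i \<Rightarrow> real" where
  "mgf_dep x i = measure_pmf.expectation (departures x i) (\<lambda>d. exp (a * real (x i - d)))"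

definition U :: "'i qstate \<Rightarrow> real" where "U x = exp (a * (\<Sum>i\<in>UNIV. real (x i)))"

lemma qmin_le: "qmin \<le> q i"
proof -
  have "i \<le> Max UNIV" by simp
  then show ?thesis using q_dec unfolding qmin_def by (cases "i = Max UNIV") (auto simp: order.order_iff_strict)
qed

lemma qmin_pos: "qmin > 0" using q_gt p_pos by (simp add: qmin_def)
lemma qmin_less_1: "qmin < 1" using q_lt1 by (simp add: qmin_def)
lemma \<epsilon>_pos: "\<epsilon> > 0" using p_pos a_pos by (simp add: \<epsilon>_def)
lemma gap_pos: "gap > 0" using qmin_pos a_pos by (simp add: gap_def)

lemma decay_pos: "decay > 0" using \<epsilon>_pos by (simp add: decay_def add_pos_pos)

text \<open>This is where the hypothesis on \<open>a\<close> enters: \<open>1 + \<epsilon> < 1 + gap \<le> exp gap\<close>.\<close>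
lemma decay_less_1: "decay < 1"
proof -
  have "1 + \<epsilon> < 1 + gap" using a_cond gap_pos by (simp add: \<epsilon>_def gap_def qmin_def)
  also have "\<dots> \<le> exp gap" by (rule exp_ge_add_one_self)
  finally show ?thesis unfolding decay_def by (simp add: exp_minus field_simps)
qed

lemma queue_kernel_eq:
  "queue_kernel p q v x = bind_pmf (bernoulli_pmf p) (\<lambda>\<xi>.
     bind_pmf (Pi_pmf UNIV 0 (departures x)) (\<lambda>D. return_pmf (next_state v x \<xi> D)))"
  unfolding queue_kernel_def departures_def next_state_def arrival_def by (simp add: if_distrib)

lemma departure_prob:
  assumes "x i \<noteq> 0" shows "0 < q i / real (x i) \<and> q i / real (x i) < 1"
proof -
  have "q i < 1" "1 \<le> real (x i)" using q_lt1 assms by auto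
  then show ?thesis using qmin_le[of i] qmin_pos by (auto simp: field_simps)
qed

lemma finite_set_departures: "finite (set_pmf (departures x i))"
  by (rule finite_subset[of _ "{..x i}"]) (use departure_prob[of x i] in \<open>auto simp: departures_def\<close>)

lemma finite_set_Pi_departures: "finite (set_pmf (Pi_pmf UNIV 0 (departures x)))"
  by (simp add: set_Pi_pmf) (intro finite_PiE_dflt, auto simp: finite_set_departures)

lemma finite_set_queue_kernel: "finite (set_pmf (queue_kernel p q v x))"
  unfolding queue_kernel_eq using finite_set_Pi_departures by simp

lemma expectation_queue_kernel:
  fixes f :: "'i qstate \<Rightarrow> real"
  shows "measure_pmf.expectation (queue_kernel p q v x) f =
    p * measure_pmf.expectation (Pi_pmf UNIV 0 (departures x)) (\<lambda>D. f (next_state v x True D))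
  + (1 - p) * measure_pmf.expectation (Pi_pmf UNIV 0 (departures x)) (\<lambda>D. f (next_state v x False D))"
  unfolding queue_kernel_eq using finite_set_Pi_departures p_pos p_lt1
  by (subst expectation_bind_pmf_finite) (auto simp: map_pmf_def[symmetric])

lemma expectation_exp_next_state:
  "measure_pmf.expectation (Pi_pmf UNIV 0 (departures x)) (\<lambda>D. exp (a * real (next_state v x \<xi> D i)))
     = mgf_dep x i * exp (a * real (arrival v x \<xi> i))"
proof -
  have "measure_pmf.expectation (Pi_pmf UNIV 0 (departures x)) (\<lambda>D. exp (a * real (next_state v x \<xi> D i)))
      = measure_pmf.expectation (map_pmf (\<lambda>D. D i) (Pi_pmf UNIV 0 (departures x)))
          (\<lambda>d. exp (a * real (x i - d)) * exp (a * real (arrival v x \<xi> i)))"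
    by (simp add: next_state_def exp_add[symmetric] algebra_simps)
  then show ?thesis by (simp add: Pi_pmf_component mgf_dep_def)
qed

lemma mgf_dep_nonneg: "mgf_dep x i \<ge> 0"
  unfolding mgf_dep_def by (rule integral_nonneg_AE) auto

text \<open>The generating function of \<open>Binomial(n, q\<^sub>i / n)\<close> is bounded uniformly in \<open>n\<close>
  by means of \<open>1 - t \<le> exp (- t)\<close>.\<close>
lemma mgf_dep_le: "x i \<noteq> 0 \<Longrightarrow> mgf_dep x i \<le> exp (- gap) * exp (a * real (x i))"
proof -
  assume nonempty: "x i \<noteq> 0"
  define n r where "n = x i" and "r = q i / real n"
  have r: "0 < r" "r < 1" using departure_prob[of x i, OF nonempty] by (simp_all add: r_def n_def)
  have "mgf_dep x i = (r + exp a * (1 - r)) ^ n"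
    using nonempty r by (simp add: mgf_dep_def departures_def binomial_pmf_expectation_exp r_def n_def)
  also have "r + exp a * (1 - r) = exp a * (1 - r * (1 - exp (- a)))"
    by (simp add: algebra_simps exp_minus field_simps)
  also have "(exp a * (1 - r * (1 - exp (- a)))) ^ n = exp (a * real n) * (1 - r * (1 - exp (- a))) ^ n"
    by (simp add: power_mult_distrib exp_of_nat_mult[symmetric] mult.commute)
  also have "(1 - r * (1 - exp (- a))) ^ n \<le> exp (- (r * (1 - exp (- a)))) ^ n"
  proof (rule power_mono)
    show "1 - r * (1 - exp (- a)) \<le> exp (- (r * (1 - exp (- a))))"
      using exp_ge_add_one_self[of "- (r * (1 - exp (- a)))"] by simp
    have "r * (1 - exp (- a)) \<le> 1 * 1" using r a_pos by (intro mult_mono) auto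
    then show "0 \<le> 1 - r * (1 - exp (- a))" by simp
  qed
  also have "exp (- (r * (1 - exp (- a)))) ^ n = exp (- (q i * (1 - exp (- a))))"
    using nonempty by (simp add: exp_of_nat_mult[symmetric] r_def n_def field_simps)
  also have "\<dots> \<le> exp (- gap)"
    unfolding gap_def using qmin_le[of i] a_pos by (auto intro!: mult_right_mono)
  finally show ?thesis by (simp add: n_def mult.commute mult_left_mono)
qed

lemma mgf_dep_le_exp: "mgf_dep x i \<le> exp (a * real (x i))"
proof (cases "x i = 0")
  case True then show ?thesis by (simp add: mgf_dep_def departures_def)
next
  case False
  have "exp (- gap) * exp (a * real (x i)) \<le> exp (a * real (x i))" using gap_pos by simp
  then show ?thesis using mgf_dep_le[of x i, OF False] by linarith
qed

lemma expectation_Phi_le: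
  "measure_pmf.expectation (queue_kernel p q v x) (Phi a) \<le> decay * Phi a x + (1 + \<epsilon>) * real CARD('i)"
proof -
  have "measure_pmf.expectation (queue_kernel p q v x) (Phi a)
     = (\<Sum>i\<in>UNIV. mgf_dep x i * (p * exp (a * real (arrival v x True i)) + (1 - p)))"
  proof -
    have "measure_pmf.expectation (Pi_pmf UNIV 0 (departures x)) (\<lambda>D. Phi a (next_state v x \<xi> D))
            = (\<Sum>i\<in>UNIV. mgf_dep x i * exp (a * real (arrival v x \<xi> i)))" for \<xi>
      unfolding Phi_def
      by (subst Bochner_Integration.integral_sum)
         (auto intro: integrable_measure_pmf_finite[OF finite_set_Pi_departures] simp: expectation_exp_next_state)
    then have "measure_pmf.expectation (queue_kernel p q v x) (Phi a)
       = p * (\<Sum>i\<in>UNIV. mgf_dep x i * exp (a * real (arrival v x True i))) + (1 - p) * (\<Sum>i\<in>UNIV. mgf_dep x i)"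
      by (simp add: expectation_queue_kernel arrival_def)
    then show ?thesis
      unfolding sum_distrib_left sum.distrib[symmetric] by (simp add: algebra_simps)
  qed
  also have "\<dots> \<le> (\<Sum>i\<in>UNIV. (exp (- gap) * exp (a * real (x i)) + 1) * (1 + \<epsilon>))"
  proof (rule sum_mono, rule mult_mono)
    fix i
    show "mgf_dep x i \<le> exp (- gap) * exp (a * real (x i)) + 1"
      using mgf_dep_le[of x i] by (cases "x i = 0") (auto simp: mgf_dep_def departures_def)
    show "p * exp (a * real (arrival v x True i)) + (1 - p) \<le> 1 + \<epsilon>"
      using \<epsilon>_pos by (simp add: arrival_def \<epsilon>_def algebra_simps)
  qed (use p_pos p_lt1 in \<open>auto intro!: add_nonneg_nonneg\<close>)
  also have "\<dots> = decay * Phi a x + (1 + \<epsilon>) * real CARD('i)"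
    by (simp add: decay_def Phi_def sum_distrib_left sum_distrib_right sum.distrib algebra_simps)
  finally show ?thesis .
qed

lemma U_eq_prod: "U y = (\<Prod>i\<in>UNIV. exp (a * real (y i)))"
  by (simp add: U_def sum_distrib_left exp_sum)

lemma U_ge_1: "U x \<ge> 1" using a_pos by (simp add: U_def sum_nonneg)

lemma sum_arrival: "(\<Sum>i\<in>UNIV. real (arrival v x \<xi> i)) = (if \<xi> then 1 else 0)"
proof (cases \<xi>)
  case True
  have "(\<Sum>i\<in>UNIV. real (arrival v x \<xi> i)) = (\<Sum>i\<in>UNIV. if v x = i then 1 else 0)"
    by (rule sum.cong) (auto simp: arrival_def True)
  also have "\<dots> = 1" by (subst sum.delta') auto
  finally show ?thesis using True by simp
qed (simp add: arrival_def)

text \<open>Departures are independent across queues, so the expected product \<open>U\<close> factorizes.\<close>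
lemma expectation_U_eq:
  "measure_pmf.expectation (queue_kernel p q v x) U = (1 + \<epsilon>) * (\<Prod>i\<in>UNIV. mgf_dep x i)"
proof -
  have "measure_pmf.expectation (Pi_pmf UNIV 0 (departures x)) (\<lambda>D. U (next_state v x \<xi> D))
          = (\<Prod>i\<in>UNIV. mgf_dep x i) * exp (a * (if \<xi> then 1 else 0))" for \<xi>
  proof -
    have "measure_pmf.expectation (Pi_pmf UNIV 0 (departures x)) (\<lambda>D. U (next_state v x \<xi> D))
       = measure_pmf.expectation (Pi_pmf UNIV 0 (departures x))
           (\<lambda>D. \<Prod>i\<in>UNIV. (\<lambda>i d. exp (a * real (x i - d)) * exp (a * real (arrival v x \<xi> i))) i (D i))"
      by (simp add: U_eq_prod next_state_def exp_add[symmetric] algebra_simps)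
    also have "\<dots> = (\<Prod>i\<in>UNIV. mgf_dep x i * exp (a * real (arrival v x \<xi> i)))"
      by (subst expectation_prod_Pi_pmf)
         (auto intro: integrable_measure_pmf_finite[OF finite_set_departures] simp: mgf_dep_def)
    also have "\<dots> = (\<Prod>i\<in>UNIV. mgf_dep x i) * exp (a * (\<Sum>i\<in>UNIV. real (arrival v x \<xi> i)))"
      by (simp add: prod.distrib sum_distrib_left exp_sum)
    finally show ?thesis by (simp add: sum_arrival)
  qed
  then show ?thesis by (simp add: expectation_queue_kernel \<epsilon>_def algebra_simps)
qed

lemma expectation_U_le:
  assumes "x \<noteq> (\<lambda>_. 0)"
  shows "measure_pmf.expectation (queue_kernel p q v x) U \<le> decay * U x"
proof -
  obtain k where k: "x k \<noteq> 0" using assms by auto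
  have "(\<Prod>i\<in>UNIV. mgf_dep x i) = mgf_dep x k * (\<Prod>i\<in>UNIV - {k}. mgf_dep x i)"
    by (simp add: prod.remove)
  also have "\<dots> \<le> (exp (- gap) * exp (a * real (x k))) * (\<Prod>i\<in>UNIV - {k}. exp (a * real (x i)))"
    using mgf_dep_le[of x k, OF k] mgf_dep_le_exp mgf_dep_nonneg
    by (intro mult_mono prod_mono prod_nonneg) auto
  also have "\<dots> = exp (- gap) * U x" by (simp add: U_eq_prod prod.remove[of UNIV k] mult_ac)
  finally show ?thesis
    unfolding expectation_U_eq decay_def using \<epsilon>_pos by (simp add: mult.assoc mult_left_mono)
qed

lemma expectation_U_le': "measure_pmf.expectation (queue_kernel p q v x) U \<le> decay * U x + (1 + \<epsilon>)"
proof (cases "x = (\<lambda>_. 0)")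
  case True
  then have "(\<Prod>i\<in>UNIV. mgf_dep x i) = 1" by (simp add: mgf_dep_def departures_def)
  then show ?thesis using decay_pos U_ge_1[of x] by (simp add: expectation_U_eq)
next
  case False
  then show ?thesis using expectation_U_le[OF False, of v] \<epsilon>_pos by simp
qed

lemma pmf_queue_kernel_0_ge:
  "pmf (queue_kernel p q v x) (\<lambda>_. 0) \<ge> (1 - p) * (\<Prod>i\<in>UNIV. pmf (departures x i) (x i))"
proof -
  let ?D = "Pi_pmf UNIV 0 (departures x)"
  have "(1 - p) * pmf ?D x \<le> pmf (bernoulli_pmf p) False * (pmf ?D x * pmf (return_pmf (next_state v x False x)) (\<lambda>_. 0))"
    using p_pos p_lt1 by (simp add: next_state_def arrival_def)
  also have "\<dots> \<le> pmf (bernoulli_pmf p) False * pmf (bind_pmf ?D (\<lambda>D. return_pmf (next_state v x False D))) (\<lambda>_. 0)"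
    using p_lt1 by (intro mult_left_mono pmf_bind_ge[OF finite_set_Pi_departures]) simp
  also have "\<dots> \<le> pmf (queue_kernel p q v x) (\<lambda>_. 0)"
    unfolding queue_kernel_eq by (rule pmf_bind_ge) simp
  finally show ?thesis by (simp add: pmf_Pi)
qed

lemma pmf_departures_self: "pmf (departures x i) (x i) = (if x i = 0 then 1 else (q i / real (x i)) ^ x i)"
  using departure_prob[of x i] by (auto simp: departures_def)

lemma pmf_queue_kernel_0_pos: "pmf (queue_kernel p q v x) (\<lambda>_. 0) > 0"
proof -
  have "(\<Prod>i\<in>UNIV. pmf (departures x i) (x i)) > 0"
    by (rule prod_pos) (use departure_prob in \<open>auto simp: pmf_departures_self\<close>)
  then show ?thesis using pmf_queue_kernel_0_ge[where v=v and x=x] p_lt1 by (smt (verit) mult_pos_pos)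
qed

lemma prod_pmf_departures_ge:
  assumes N: "N \<ge> 1" and x: "\<And>i. x i \<le> N"
  shows "(\<Prod>i\<in>UNIV. pmf (departures x i) (x i)) \<ge> ((qmin / real N) ^ N) ^ CARD('i)"
proof -
  have r: "0 < qmin / real N" "qmin / real N \<le> 1" using qmin_pos N qmin_less_1 by (auto simp: field_simps)
  have "(qmin / real N) ^ N \<le> pmf (departures x i) (x i)" for i
  proof (cases "x i = 0")
    case True then show ?thesis using r pmf_departures_self[of x i] by (simp add: power_le_one)
  next
    case False
    have "(qmin / real N) ^ N \<le> (qmin / real N) ^ x i"
      using r x[of i] by (intro power_decreasing) auto
    also have "\<dots> \<le> (q i / real (x i)) ^ x i"
      using r qmin_le[of i] x[of i] False qmin_pos by (intro power_mono frac_le) auto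
    finally show ?thesis using False by (simp add: pmf_departures_self)
  qed
  then have "(\<Prod>i\<in>(UNIV::'i set). (qmin / real N) ^ N) \<le> (\<Prod>i\<in>UNIV. pmf (departures x i) (x i))"
    using r by (intro prod_mono) auto
  then show ?thesis by simp
qed

definition "drift_const = (1 + \<epsilon>) * real CARD('i)"
definition "small_level = nat \<lceil>8 * drift_const / (1 - decay) / a\<rceil>"
definition "minor_const = (1 - p) * ((qmin / real small_level) ^ small_level) ^ CARD('i)"

lemma drift_const_pos: "drift_const > 0" using \<epsilon>_pos by (simp add: drift_const_def)

lemma small_level_ge_1: "small_level \<ge> 1"
proof -
  have "0 < 8 * drift_const / (1 - decay) / a" using drift_const_pos decay_less_1 a_pos by simp
  then have "1 \<le> \<lceil>8 * drift_const / (1 - decay) / a\<rceil>" by simp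
  then show ?thesis unfolding small_level_def by (simp add: le_nat_iff)
qed

lemma minor_const_pos: "minor_const > 0"
  using p_lt1 qmin_pos small_level_ge_1 by (simp add: minor_const_def)

lemma harris_queue_kernel:
  "harris (queue_kernel p q v) (Phi a) (\<lambda>_. 0) decay drift_const minor_const"
proof
  show "\<And>x. finite (set_pmf (queue_kernel p q v x))" by (rule finite_set_queue_kernel)
  show "\<And>x :: 'i qstate. 1 \<le> Phi a x" using a_pos by (intro Phi_ge_1) simp
  show "\<And>x. measure_pmf.expectation (queue_kernel p q v x) (Phi a) \<le> decay * Phi a x + drift_const"
    unfolding drift_const_def by (rule expectation_Phi_le)
  show "0 \<le> decay" "decay < 1" "0 < drift_const" "0 < minor_const"
    using decay_pos decay_less_1 drift_const_pos minor_const_pos by auto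
  fix x :: "'i qstate"
  assume small: "Phi a x \<le> 8 * drift_const / (1 - decay)"
  have "x i \<le> small_level" for i
  proof -
    have "real (x i) \<le> 8 * drift_const / (1 - decay) / a"
      using real_le_Phi_div[OF a_pos, of x i] divide_right_mono[OF small, of a] a_pos by linarith
    then show ?thesis unfolding small_level_def by linarith
  qed
  then have "minor_const \<le> (1 - p) * (\<Prod>i\<in>UNIV. pmf (departures x i) (x i))"
    unfolding minor_const_def using p_lt1 by (intro mult_left_mono prod_pmf_departures_ge small_level_ge_1) auto
  also have "\<dots> \<le> pmf (queue_kernel p q v x) (\<lambda>_. 0)" by (rule pmf_queue_kernel_0_ge)
  finally show "minor_const \<le> pmf (queue_kernel p q v x) (\<lambda>_. 0)" .
qed

definition stationary_law :: "('i qstate \<Rightarrow> 'i) \<Rightarrow> 'i qstate pmf" where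
  "stationary_law v = harris.stat (queue_kernel p q v) (\<lambda>_. 0)"

lemma chain_structure:
  "let K = queue_kernel p q v; \<theta> = (\<lambda>_. 0) :: 'i qstate; S = communicating_class K \<theta> in
     closed_set K S \<and> period K \<theta> = 1 \<and> (\<forall>x. x \<notin> S \<longrightarrow> transient K x)
     \<and> stationary K (stationary_law v) \<and> (\<forall>\<pi>'. stationary K \<pi>' \<longrightarrow> \<pi>' = stationary_law v)
     \<and> geom_ergodic_on K S (stationary_law v)"
proof -
  interpret H: harris "queue_kernel p q v" "Phi a" "\<lambda>_. 0" decay drift_const minor_const
    by (rule harris_queue_kernel)
  let ?K = "queue_kernel p q v" and ?S = "communicating_class (queue_kernel p q v) (\<lambda>_. 0)"
  have acc: "accessible ?K x (\<lambda>_. 0)" for x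
    by (rule accessible_if_pmf_pos[OF pmf_queue_kernel_0_pos])
  have transient: "\<forall>x. x \<notin> ?S \<longrightarrow> transient ?K x"
  proof (intro allI impI)
    fix x assume "x \<notin> ?S"
    then have "\<not> accessible ?K (\<lambda>_. 0) x" using acc by (simp add: communicating_class_def)
    then show "transient ?K x"
      by (rule transient_if_not_accessible[OF H.finite_support _ pmf_queue_kernel_0_pos])
  qed
  have unique: "\<forall>\<pi>'. stationary ?K \<pi>' \<longrightarrow> \<pi>' = H.stat"
    using H.stationary_unique by blast
  have geometric: "geom_ergodic_on ?K ?S H.stat"
    unfolding geom_ergodic_on_def
  proof (intro exI[of _ H.\<rho>] exI[of _ "\<lambda>x. H.w x + H.w (\<lambda>_. 0) + H.C\<^sub>\<theta>"] conjI ballI allI)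
    show "0 \<le> H.\<rho>" "H.\<rho> < 1" using H.\<rho>_pos H.\<rho>_less_1 by simp_all
  qed (rule H.tv_dist_kstep_stat_le)
  show ?thesis
    unfolding Let_def stationary_law_def
    using closed_set_communicating_class[OF H.finite_support acc]
      period_eq_1_if_pmf_pos[OF pmf_queue_kernel_0_pos] transient H.stationary_stat unique geometric
    by (intro conjI)
qed

lemma hitting_time_exp_moment:
  "hit_expect (queue_kernel p q v) (\<lambda>_. 0) (return_pmf x) (\<lambda>\<tau> xs. ennreal (exp (- ln decay * real \<tau>)))
     \<le> ennreal (U x)"
proof (rule hit_expect_exp_le[OF finite_set_queue_kernel U_ge_1])
  fix y :: "'i qstate" assume "y \<noteq> (\<lambda>_. 0)"
  then show "exp (- ln decay) * measure_pmf.expectation (queue_kernel p q v y) U \<le> U y"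
    using expectation_U_le[of y v] decay_pos by (simp add: exp_minus field_simps)
qed

lemma geometric_convergence:
  assumes f: "\<And>x. \<bar>f x\<bar> \<le> C * Phi a x"
  shows "\<exists>K > 0. \<exists>\<eta>. 0 < \<eta> \<and> \<eta> < 1 \<and> (\<forall>v x t.
           integrable (measure_pmf (kstep (queue_kernel p q v) x t)) f
         \<and> integrable (measure_pmf (stationary_law v)) f
         \<and> \<bar>measure_pmf.expectation (kstep (queue_kernel p q v) x t) f
              - measure_pmf.expectation (stationary_law v) f\<bar> \<le> K * (1 + Phi a x) * \<eta> ^ t)"
proof -
  note H = harris_queue_kernel
  let ?M = "harris.M\<^sub>V (Phi a) ((\<lambda>_. 0) :: 'i qstate) decay drift_const minor_const"
  have "0 \<le> C * Phi a ((\<lambda>_. 0) :: 'i qstate)" using f by (meson abs_ge_zero order_trans)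
  then have "C \<ge> 0" using Phi_ge_1[of a "(\<lambda>_. 0) :: 'i qstate"] a_pos by (simp add: zero_le_mult_iff)
  then have "C * ?M \<ge> 0" using harris.M\<^sub>V_pos[OF H] by simp
  moreover have "\<bar>measure_pmf.expectation (kstep (queue_kernel p q v) x t) f
              - measure_pmf.expectation (stationary_law v) f\<bar>
           \<le> (C * ?M + 1) * (1 + Phi a x) * harris.\<rho> decay minor_const ^ t" for v x t
  proof -
    have "0 \<le> (1 + Phi a x) * harris.\<rho> decay minor_const ^ t"
      using Phi_ge_1[of a x] a_pos harris.\<rho>_pos[OF H] by simp
    then show ?thesis
      using harris.geometric_convergence_V(2)[OF harris_queue_kernel[of v] f, of t x]
      by (simp add: harris.Pn_def[OF H] stationary_law_def algebra_simps)
  qed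
  ultimately show ?thesis
    using harris.\<rho>_pos[OF H] harris.\<rho>_less_1[OF H] harris.geometric_convergence_V(1)[OF H f]
    by (intro exI[of _ "C * ?M + 1"] exI[of _ "harris.\<rho> decay minor_const"])
       (auto simp: stationary_law_def intro: integrable_measure_pmf_finite finite_set_pmf_kstep finite_set_queue_kernel)
qed

lemma stationary_U_bounded:
  "integrable (measure_pmf (stationary_law v)) U"
  "measure_pmf.expectation (stationary_law v) U \<le> 1 + (1 + \<epsilon>) / (1 - decay)"
proof -
  interpret H: harris "queue_kernel p q v" "Phi a" "\<lambda>_. 0" decay drift_const minor_const
    by (rule harris_queue_kernel)
  have U_nonneg: "U x \<ge> 0" for x using U_ge_1[of x] by simp
  have "H.Pn n U (\<lambda>_. 0) \<le> U (\<lambda>_. 0) + (1 + \<epsilon>) / (1 - decay)" for n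
    unfolding H.Pn_def
    by (rule expectation_kstep_drift_le[of _ U, OF H.finite_support U_nonneg expectation_U_le'])
       (use decay_pos decay_less_1 \<epsilon>_pos in auto)
  then have bounded: "H.Pn n U (\<lambda>_. 0) \<le> 1 + (1 + \<epsilon>) / (1 - decay)" for n by (simp add: U_def)
  show "integrable (measure_pmf (stationary_law v)) U"
    unfolding stationary_law_def by (rule H.stat_moment(1)[of U, OF U_nonneg bounded])
  show "measure_pmf.expectation (stationary_law v) U \<le> 1 + (1 + \<epsilon>) / (1 - decay)"
    unfolding stationary_law_def by (rule H.stat_moment(2)[of U, OF U_nonneg bounded])
qed

lemma total_le_U_div: "(\<Sum>i\<in>UNIV. real (x i)) \<le> U x / a"
proof -
  have "a * (\<Sum>i\<in>UNIV. real (x i)) \<le> U x"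
    using exp_ge_add_one_self[of "a * (\<Sum>i\<in>UNIV. real (x i))"] unfolding U_def by linarith
  then show ?thesis using a_pos by (simp add: field_simps)
qed

lemma stationary_total_bounded:
  "integrable (measure_pmf (stationary_law v)) (\<lambda>x. \<Sum>i\<in>UNIV. real (x i))"
  "measure_pmf.expectation (stationary_law v) (\<lambda>x. \<Sum>i\<in>UNIV. real (x i))
     \<le> (1 + (1 + \<epsilon>) / (1 - decay)) / a"
proof -
  have U_div: "integrable (measure_pmf (stationary_law v)) (\<lambda>x. U x / a)"
    using stationary_U_bounded(1) by simp
  have "norm (\<Sum>i\<in>UNIV. real (x i)) \<le> norm (U x / a)" for x
    using total_le_U_div[of x] U_ge_1[of x] a_pos by (simp add: sum_nonneg)
  then show "integrable (measure_pmf (stationary_law v)) (\<lambda>x. \<Sum>i\<in>UNIV. real (x i))"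
    by (intro Bochner_Integration.integrable_bound[OF U_div] AE_I2) auto
  then have "measure_pmf.expectation (stationary_law v) (\<lambda>x. \<Sum>i\<in>UNIV. real (x i))
               \<le> measure_pmf.expectation (stationary_law v) U / a"
    using integral_mono[OF _ U_div total_le_U_div] by simp
  also have "\<dots> \<le> (1 + (1 + \<epsilon>) / (1 - decay)) / a"
    using stationary_U_bounded(2) a_pos by (simp add: divide_right_mono)
  finally show "measure_pmf.expectation (stationary_law v) (\<lambda>x. \<Sum>i\<in>UNIV. real (x i))
     \<le> (1 + (1 + \<epsilon>) / (1 - decay)) / a" .
qed

lemma stationary_mean_bounded:
  "(\<integral>\<^sup>+ x. ennreal (\<Sum>i\<in>UNIV. real (x i)) \<partial>measure_pmf (stationary_law v))
     \<le> ennreal ((1 + (1 + \<epsilon>) / (1 - decay)) / a)"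
proof -
  have "(\<integral>\<^sup>+ x. ennreal (\<Sum>i\<in>UNIV. real (x i)) \<partial>measure_pmf (stationary_law v))
          = ennreal (measure_pmf.expectation (stationary_law v) (\<lambda>x. \<Sum>i\<in>UNIV. real (x i)))"
    by (rule nn_integral_eq_integral) (use stationary_total_bounded(1) in \<open>auto simp: sum_nonneg\<close>)
  then show ?thesis using stationary_total_bounded(2) by (simp add: ennreal_leI)
qed

lemma finite_total_less: "finite {x :: 'i qstate. (\<Sum>i\<in>UNIV. real (x i)) < real N}"
proof (rule finite_subset)
  show "{x :: 'i qstate. (\<Sum>i\<in>UNIV. real (x i)) < real N} \<subseteq> Pi\<^sub>E UNIV (\<lambda>_. {..N})"
  proof
    fix x :: "'i qstate" assume "x \<in> {x. (\<Sum>i\<in>UNIV. real (x i)) < real N}"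
    then have total: "(\<Sum>i\<in>UNIV. real (x i)) < real N" by simp
    have "real (x i) \<le> (\<Sum>i\<in>UNIV. real (x i))" for i by (rule member_le_sum) auto
    then have "real (x i) < real N" for i using total by (rule order_le_less_trans)
    then show "x \<in> Pi\<^sub>E UNIV (\<lambda>_. {..N})" by (simp add: PiE_UNIV_domain less_imp_le)
  qed
  show "finite (Pi\<^sub>E (UNIV :: 'i set) (\<lambda>_. {..N}))" by (rule finite_PiE) auto
qed

lemma stationary_tight:
  assumes "\<epsilon>' > 0"
  shows "\<exists>F :: 'i qstate set. finite F \<and> (\<forall>v. measure_pmf.prob (stationary_law v) F \<ge> 1 - \<epsilon>')"
proof -
  define B where "B = (1 + (1 + \<epsilon>) / (1 - decay)) / a"
  define N where "N = Suc (nat \<lceil>B / \<epsilon>'\<rceil>)"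
  define F where "F = {x :: 'i qstate. (\<Sum>i\<in>UNIV. real (x i)) < real N}"
  have N: "real N > 0" by (simp add: N_def)
  have "B / \<epsilon>' \<le> real N" using real_nat_ceiling_ge[of "B / \<epsilon>'"] by (simp add: N_def)
  then have B_N: "B / real N \<le> \<epsilon>'" using assms N by (simp add: field_simps)
  have "measure_pmf.prob (stationary_law v) F \<ge> 1 - \<epsilon>'" for v
  proof -
    have "- F = {x. real N \<le> (\<Sum>i\<in>UNIV. real (x i))}" by (auto simp: F_def)
    then have "measure_pmf.prob (stationary_law v) (- F)
            \<le> measure_pmf.expectation (stationary_law v) (\<lambda>x. \<Sum>i\<in>UNIV. real (x i)) / real N"
      using integral_Markov_inequality_measure[OF stationary_total_bounded(1), where A = UNIV and c = "real N"] N
      by (simp add: sum_nonneg)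
    also have "\<dots> \<le> B / real N"
      unfolding B_def by (rule divide_right_mono[OF stationary_total_bounded(2)]) (use N in simp)
    finally show ?thesis
      using B_N measure_pmf.prob_compl[of F "stationary_law v"] by (simp add: Compl_eq_Diff_UNIV)
  qed
  then show ?thesis using finite_total_less by (auto simp: F_def)
qed

lemma stationary_cost_until_hitting:
  "hit_expect (queue_kernel p q v) (\<lambda>_. 0) (stationary_law v)
       (\<lambda>\<tau> xs. ennreal (\<Sum>t\<le>\<tau>. \<Sum>i\<in>UNIV. real ((xs ! t) i)))
     \<le> ennreal ((1 + (1 + \<epsilon>) / (1 - decay)) / (a * (1 - decay)))"
proof -
  define H where "H x = U x / (a * (1 - decay))" for x
  have den: "a * (1 - decay) > 0" using a_pos decay_less_1 by simp
  have H_nonneg: "H x \<ge> 0" for x using U_ge_1[of x] den by (simp add: H_def)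
  have poisson: "(\<Sum>i\<in>UNIV. real (y i)) + measure_pmf.expectation (queue_kernel p q v y) H \<le> H y"
    if "y \<noteq> (\<lambda>_. 0)" for y
  proof -
    have "measure_pmf.expectation (queue_kernel p q v y) H \<le> decay * U y / (a * (1 - decay))"
      using expectation_U_le[OF that, of v] den by (simp add: H_def[abs_def] divide_right_mono)
    moreover have "U y / a + decay * U y / (a * (1 - decay)) = H y"
      using a_pos decay_less_1 by (simp add: H_def field_simps)
    ultimately show ?thesis using total_le_U_div[of y] by linarith
  qed
  have "hit_expect (queue_kernel p q v) (\<lambda>_. 0) (stationary_law v)
          (\<lambda>\<tau> xs. ennreal (\<Sum>t\<le>\<tau>. \<Sum>i\<in>UNIV. real ((xs ! t) i)))
        \<le> (\<integral>\<^sup>+ x. ennreal (H x) \<partial>measure_pmf (stationary_law v))"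
    by (rule hit_expect_sum_le[OF finite_set_queue_kernel H_nonneg _ _ poisson]) (auto simp: sum_nonneg)
  also have "\<dots> = ennreal (measure_pmf.expectation (stationary_law v) H)"
    by (rule nn_integral_eq_integral) (use stationary_U_bounded(1) H_nonneg in \<open>auto simp: H_def\<close>)
  also have "\<dots> = ennreal (measure_pmf.expectation (stationary_law v) U / (a * (1 - decay)))"
    by (simp add: H_def[abs_def])
  also have "\<dots> \<le> ennreal ((1 + (1 + \<epsilon>) / (1 - decay)) / (a * (1 - decay)))"
    using stationary_U_bounded(2) den by (intro ennreal_leI divide_right_mono) auto
  finally show ?thesis .
qed

end

theorem lemma2:
  fixes p a :: real and q :: "'i::{finite,linorder} \<Rightarrow> real"
  assumes p_pos: "0 < p" and p_lt1: "p < 1"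
    and q_lt1: "\<forall>i. q i < 1"
    and q_dec: "\<forall>i j. i < j \<longrightarrow> q j < q i"
    and q_gt: "2 * p < q (Max UNIV)"
    and a_pos: "a > 0"
    and a_cond: "p * (exp a - 1) < q (Max UNIV) / 2 * (1 - exp (- a))"
  shows "\<exists>\<pi> :: ('i qstate \<Rightarrow> 'i) \<Rightarrow> 'i qstate pmf.
    (\<forall>v. let K = queue_kernel p q v; \<theta> = (\<lambda>_. 0) :: 'i qstate; S = communicating_class K \<theta> in
           closed_set K S \<and> period K \<theta> = 1 \<and> (\<forall>x. x \<notin> S \<longrightarrow> transient K x)
         \<and> stationary K (\<pi> v) \<and> (\<forall>\<pi>'. stationary K \<pi>' \<longrightarrow> \<pi>' = \<pi> v)
         \<and> geom_ergodic_on K S (\<pi> v))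
  \<and> (\<exists>b > 0. \<forall>x :: 'i qstate. x \<noteq> (\<lambda>_. 0) \<longrightarrow> (\<exists>Kx :: real. \<forall>v.
        hit_expect (queue_kernel p q v) (\<lambda>_. 0) (return_pmf x)
           (\<lambda>\<tau> xs. ennreal (exp (b * real \<tau>))) \<le> ennreal Kx))
  \<and> (\<forall>f :: 'i qstate \<Rightarrow> real. (\<exists>C. \<forall>x. \<bar>f x\<bar> \<le> C * Phi a x) \<longrightarrow>
       (\<exists>K > 0. \<exists>\<eta>. 0 < \<eta> \<and> \<eta> < 1 \<and> (\<forall>v x t.
          integrable (measure_pmf (kstep (queue_kernel p q v) x t)) f
        \<and> integrable (measure_pmf (\<pi> v)) f
        \<and> \<bar>measure_pmf.expectation (kstep (queue_kernel p q v) x t) f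
             - measure_pmf.expectation (\<pi> v) f\<bar> \<le> K * (1 + Phi a x) * \<eta> ^ t)))
  \<and> (\<exists>C :: real. \<forall>v. (\<integral>\<^sup>+ x. ennreal (\<Sum>i\<in>UNIV. real (x i)) \<partial>measure_pmf (\<pi> v)) \<le> ennreal C)
  \<and> (\<forall>\<epsilon> > 0. \<exists>F :: 'i qstate set. finite F \<and> (\<forall>v. measure_pmf.prob (\<pi> v) F \<ge> 1 - \<epsilon>))
  \<and> (\<exists>C :: real. \<forall>v. hit_expect (queue_kernel p q v) (\<lambda>_. 0) (\<pi> v)
        (\<lambda>\<tau> xs. ennreal (\<Sum>t\<le>\<tau>. \<Sum>i\<in>UNIV. real ((xs ! t) i))) \<le> ennreal C)"
proof -
  interpret queue_model p a q by unfold_locales (use assms in auto)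
  have hitting_time: "\<exists>b > 0. \<forall>x :: 'i qstate. x \<noteq> (\<lambda>_. 0) \<longrightarrow> (\<exists>Kx :: real. \<forall>v.
      hit_expect (queue_kernel p q v) (\<lambda>_. 0) (return_pmf x) (\<lambda>\<tau> xs. ennreal (exp (b * real \<tau>)))
        \<le> ennreal Kx)"
    using decay_pos decay_less_1 hitting_time_exp_moment
    by (intro exI[of _ "- ln decay"] conjI allI impI exI) auto
  have mean: "\<exists>C :: real. \<forall>v. (\<integral>\<^sup>+ x. ennreal (\<Sum>i\<in>UNIV. real (x i)) \<partial>measure_pmf (stationary_law v))
      \<le> ennreal C"
    using stationary_mean_bounded by (intro exI allI)
  have cost: "\<exists>C :: real. \<forall>v. hit_expect (queue_kernel p q v) (\<lambda>_. 0) (stationary_law v)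
      (\<lambda>\<tau> xs. ennreal (\<Sum>t\<le>\<tau>. \<Sum>i\<in>UNIV. real ((xs ! t) i))) \<le> ennreal C"
    using stationary_cost_until_hitting by (intro exI allI)
  show ?thesis
    using chain_structure hitting_time mean stationary_tight cost
    by (intro exI[of _ stationary_law] conjI allI impI) (auto intro: geometric_convergence)
qed

end
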